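(* Consider non-adaptive group testing of $N$ items with an unknown defective set $S\subset\{1,\dots,N\}$ of known size $|S|=K$, using $T$ tests with a random design whose entries are i.i.d. with law $Q$ on $\{0,1\}$, outcomes generated by a memoryless test channel with per-test law $p(y\mid x_S)$, and maximum-likelihood decoding. For $i\in\{1,\dots,K\}$ let $\Xi_S^{\{i\}}$ be the set of pairs $(\mathcal S^1,\mathcal S^2)$ of disjoint sets with $\mathcal S^1\cup\mathcal S^2=S$, $|\mathcal S^1|=i$, $|\mathcal S^2|=K-i$. Then a sufficient condition on $T$ for the average error probability to be arbitrarily small is $$T>\max_{i\in\{1,\dots,K\},\ (\mathcal S^1,\mathcal S^2)\in\Xi_S^{\{i\}}}\ \frac{\log\left(K\binom{N-K}{i}\binom{K}{i}\right)}{I(X_{\mathcal S^1};X_{\mathcal S^2},Y)}.$$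
   Context: Setup. A design with $T$ tests is an $N\times T$ binary matrix (codebook) whose $j$-th row $X_j^T\in\{0,1\}^T$ (the codeword of item $j$) has $X_j(t)=1$ iff item $j$ is included in test $t$. The codebook is random: all entries are i.i.d. with a common law $Q$ on $\{0,1\}$ (for a set $A$ of items and a matrix/vector of their entries, $Q(\cdot)$ denotes the corresponding product probability). For a set $A$ of items, $\mathbf X_A$ denotes the $|A|\times T$ submatrix of rows in $A$, and $X_A(t)\in\{0,1\}^{|A|}$ its $t$-th column. Given the defective set $S$, the outcome $Y^T=(Y(1),\dots,Y(T))$ has law $p(Y^T\mid \mathbf X_S)=\prod_{t=1}^T p(Y(t)\mid X_S(t))$ for a fixed per-test transition law $p(y\mid x_S)$ on a finite output alphabet (e.g. $Y(t)=\bigvee_{j\in S}X_j(t)$ in the noiseless case). The ML decoder outputs a $K$-subset $S'$ maximizing $p(Y^T\mid\mathbf X_{S'})$ over all $\binom{N}{K}$ $K$-subsets. The average error probability is the probability that the decoded set differs from the true one, averaged over the random codebook and over the defective set chosen uniformly among all $K$-subsets. In the mutual information, $X_S=(X_{\mathcal S^1},X_{\mathcal S^2})$ is a single per-test input vector with i.i.d. $Q$ entries and $Y$ is the corresponding per-test outcome with law $p(\cdot\mid X_S)$; $\log$ is base 2. *)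

theory Defs
  imports Complex_Main "HOL-Library.FuncSet" "HOL-Combinatorics.Permutations"
begin

definition Qp :: "real \<Rightarrow> 'a set \<Rightarrow> ('a \<Rightarrow> bool) \<Rightarrow> real" where
  "Qp q A x = (\<Prod>j\<in>A. if x j then q else 1 - q)"

definition finite_mi :: "'u set \<Rightarrow> 'v set \<Rightarrow> ('u \<Rightarrow> 'v \<Rightarrow> real) \<Rightarrow> real" where
  "finite_mi U V P =
     (\<Sum>u\<in>U. \<Sum>v\<in>V. if P u v = 0 then 0
        else P u v * log 2 (P u v / ((\<Sum>v'\<in>V. P u v') * (\<Sum>u'\<in>U. P u' v))))"

text \<open>Per-test input vector X_S = (X_1..X_K) indexed by positions 0..K-1, i.i.d. Q;
  Y ~ W(X_S, .). For a set A of positions (playing S^1) and B = its complement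
  (playing S^2): I(X_A ; X_B, Y).\<close>
definition mi_split :: "real \<Rightarrow> nat \<Rightarrow> ((nat \<Rightarrow> bool) \<Rightarrow> 'y::finite \<Rightarrow> real) \<Rightarrow> nat set \<Rightarrow> real" where
  "mi_split q K W A =
     (let B = {..<K} - A in
      finite_mi (PiE A (\<lambda>_. UNIV)) (PiE B (\<lambda>_. UNIV) \<times> (UNIV :: 'y set))
        (\<lambda>u (v, y). Qp q A u * Qp q B v *
            W (\<lambda>j. if j \<in> A then u j else if j \<in> B then v j else False) y))"

text \<open>Codebook X :: item x test -> bool on {..<N} x {..<T}. Input of test t for set S.\<close>
definition test_input :: "nat set \<Rightarrow> (nat \<times> nat \<Rightarrow> bool) \<Rightarrow> nat \<Rightarrow> nat \<Rightarrow> bool" where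
  "test_input S X t = (\<lambda>k. if k < card S then X (sorted_list_of_set S ! k, t) else False)"

definition lik :: "nat \<Rightarrow> ((nat \<Rightarrow> bool) \<Rightarrow> 'y \<Rightarrow> real) \<Rightarrow> nat set
                    \<Rightarrow> (nat \<times> nat \<Rightarrow> bool) \<Rightarrow> (nat \<Rightarrow> 'y) \<Rightarrow> real" where
  "lik T W S X ys = (\<Prod>t<T. W (test_input S X t) (ys t))"

definition codebooks :: "nat \<Rightarrow> nat \<Rightarrow> (nat \<times> nat \<Rightarrow> bool) set" where
  "codebooks N T = PiE ({..<N} \<times> {..<T}) (\<lambda>_. UNIV)"

text \<open>ML decoding error (ties counted as errors): some other K-subset S' has
  likelihood at least that of the true S.\<close>
definition ml_error :: "nat \<Rightarrow> nat \<Rightarrow> ((nat \<Rightarrow> bool) \<Rightarrow> 'y \<Rightarrow> real) \<Rightarrow> nat set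
                         \<Rightarrow> (nat \<times> nat \<Rightarrow> bool) \<Rightarrow> (nat \<Rightarrow> 'y) \<Rightarrow> bool" where
  "ml_error N T W S X ys =
     (\<exists>S'. S' \<subseteq> {..<N} \<and> card S' = card S \<and> S' \<noteq> S \<and> lik T W S' X ys \<ge> lik T W S X ys)"

definition avg_err :: "real \<Rightarrow> ((nat \<Rightarrow> bool) \<Rightarrow> 'y::finite \<Rightarrow> real) \<Rightarrow> nat \<Rightarrow> nat \<Rightarrow> nat \<Rightarrow> real" where
  "avg_err q W N K T =
     (\<Sum>S\<in>{S. S \<subseteq> {..<N} \<and> card S = K}.
        \<Sum>X\<in>codebooks N T. Qp q ({..<N} \<times> {..<T}) X *
          (\<Sum>ys\<in>PiE {..<T} (\<lambda>_. (UNIV :: 'y set)).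
             lik T W S X ys * (if ml_error N T W S X ys then 1 else 0)))
     / real (N choose K)"

end

theory Submission
  imports Defs "HOL-Analysis.Convex"
begin

text \<open>Gallager's random coding argument, adapted to group testing. If ML decoding fails, some
  wrong \<open>K\<close>-set is at least as likely as the true set \<open>S\<close>; it keeps the items of \<open>S\<close> at some
  positions \<open>B\<close> and replaces those at the remaining positions \<open>A \<noteq> {}\<close> by a set \<open>S\<^sub>1\<close> of
  non-defective items. Bounding the indicator of this event by
  \<open>(\<Sum>\<^bsub>S\<^sub>1\<^esub> (p(Y|S') / p(Y|S)) powr (1/(1+\<rho>))) powr \<rho>\<close> for each split \<open>(A, B)\<close> and averaging over
  the independent codewords (Jensen for the impostors, which are independent of the true
  codewords) gives an error probability of at most
  \<open>\<Sum>\<^bsub>A\<^esub> binom(N - K, |A|) powr \<rho> * 2 powr (- T * E\<^sub>0(\<rho>))\<close>, with Gallager's exponent \<open>E\<^sub>0\<close> of the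
  channel from \<open>X\<^sub>A\<close> to \<open>Y\<close> with side information \<open>X\<^sub>B\<close>. Since \<open>E\<^sub>0(0) = 0\<close> and
  \<open>E\<^sub>0'(0) = I(X\<^sub>A; X\<^sub>B, Y)\<close>, a small \<open>\<rho> > 0\<close> makes every term vanish as soon as
  \<open>T\<close> exceeds \<open>log binom(N - K, |A|) / I(X\<^sub>A; X\<^sub>B, Y)\<close> by a constant factor.\<close>

section \<open>Product Bernoulli measure\<close>

lemma Qp_nonneg: "0 \<le> q \<Longrightarrow> q \<le> 1 \<Longrightarrow> 0 \<le> Qp q A x"
  unfolding Qp_def by (intro prod_nonneg) auto

lemma sum_Qp_PiE:
  assumes "finite A"
  shows "(\<Sum>x\<in>PiE A (\<lambda>_. UNIV). Qp q A x) = 1"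
proof -
  have "(\<Sum>x\<in>PiE A (\<lambda>_. UNIV). Qp q A x) = (\<Prod>j\<in>A. \<Sum>b\<in>UNIV. if b then q else 1 - q)"
    unfolding Qp_def by (subst prod_sum_PiE) (use assms in auto)
  also have "\<dots> = 1" by (simp add: UNIV_bool)
  finally show ?thesis .
qed

lemma sum_PiE_Un:
  fixes g :: "('i \<Rightarrow> bool) \<Rightarrow> real"
  assumes "finite I" "finite J" "I \<inter> J = {}"
  shows "(\<Sum>X\<in>PiE (I \<union> J) (\<lambda>_. UNIV). g X) =
    (\<Sum>a\<in>PiE I (\<lambda>_. UNIV). \<Sum>b\<in>PiE J (\<lambda>_. UNIV). g (\<lambda>x. if x \<in> I then a x else b x))"
proof -
  have "(\<Sum>(a,b)\<in>PiE I (\<lambda>_. UNIV) \<times> PiE J (\<lambda>_. UNIV). g (\<lambda>x. if x \<in> I then a x else b x))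
      = (\<Sum>X\<in>PiE (I \<union> J) (\<lambda>_. UNIV). g X)"
    by (rule sum.reindex_bij_witness[of _ "\<lambda>X. (restrict X I, restrict X J)"
          "\<lambda>(a,b) x. if x \<in> I then a x else b x"])
       (use assms in \<open>auto simp: PiE_def extensional_def restrict_def fun_eq_iff\<close>)
  then show ?thesis by (simp add: sum.cartesian_product)
qed

lemma Qp_Un:
  assumes "finite I" "finite J" "I \<inter> J = {}"
  shows "Qp q (I \<union> J) (\<lambda>x. if x \<in> I then a x else b x) = Qp q I a * Qp q J b"
  unfolding Qp_def using assms
  by (subst prod.union_disjoint) (auto intro!: arg_cong2[where f="(*)"] prod.cong)

lemma sum_Qp_PiE_Un:
  fixes F :: "('i \<Rightarrow> bool) \<Rightarrow> ('i \<Rightarrow> bool) \<Rightarrow> real"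
  assumes "finite I" "finite J" "I \<inter> J = {}"
    and F1: "\<And>a a' b. (\<forall>i\<in>I. a i = a' i) \<Longrightarrow> F a b = F a' b"
    and F2: "\<And>a b b'. (\<forall>j\<in>J. b j = b' j) \<Longrightarrow> F a b = F a b'"
  shows "(\<Sum>X\<in>PiE (I \<union> J) (\<lambda>_. UNIV). Qp q (I \<union> J) X * F X X)
       = (\<Sum>a\<in>PiE I (\<lambda>_. UNIV). Qp q I a * (\<Sum>b\<in>PiE J (\<lambda>_. UNIV). Qp q J b * F a b))"
proof -
  have "F (\<lambda>x. if x \<in> I then a x else b x) (\<lambda>x. if x \<in> I then a x else b x) = F a b" for a b
  proof -
    have "F (\<lambda>x. if x \<in> I then a x else b x) (\<lambda>x. if x \<in> I then a x else b x)
        = F a (\<lambda>x. if x \<in> I then a x else b x)" by (rule F1) simp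
    also have "\<dots> = F a b" by (rule F2) (use assms(3) in auto)
    finally show ?thesis .
  qed
  then show ?thesis
    unfolding sum_PiE_Un[OF assms(1-3)] Qp_Un[OF assms(1-3)] sum_distrib_left
    by (intro sum.cong refl) (simp add: mult_ac)
qed

lemma sum_Qp_PiE_Un_mult:
  fixes f g :: "('i \<Rightarrow> bool) \<Rightarrow> real"
  assumes "finite I" "finite J" "I \<inter> J = {}"
    and "\<And>X X'. (\<forall>i\<in>I. X i = X' i) \<Longrightarrow> f X = f X'"
    and "\<And>X X'. (\<forall>j\<in>J. X j = X' j) \<Longrightarrow> g X = g X'"
  shows "(\<Sum>X\<in>PiE (I \<union> J) (\<lambda>_. UNIV). Qp q (I \<union> J) X * (f X * g X))
       = (\<Sum>a\<in>PiE I (\<lambda>_. UNIV). Qp q I a * f a) * (\<Sum>b\<in>PiE J (\<lambda>_. UNIV). Qp q J b * g b)"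
  using sum_Qp_PiE_Un[of I J "\<lambda>a b. f a * g b" q] assms
  unfolding sum_product by (simp add: sum_distrib_left mult_ac)

lemma sum_Qp_PiE_reindex:
  fixes \<psi> :: "('p \<Rightarrow> bool) \<Rightarrow> real" and h :: "'p \<Rightarrow> 'i"
  assumes "inj_on h P"
    and dep: "\<And>u u'. (\<forall>k\<in>P. u k = u' k) \<Longrightarrow> \<psi> u = \<psi> u'"
  shows "(\<Sum>a\<in>PiE (h ` P) (\<lambda>_. UNIV). Qp q (h ` P) a * \<psi> (\<lambda>k. a (h k)))
       = (\<Sum>u\<in>PiE P (\<lambda>_. UNIV). Qp q P u * \<psi> u)"
proof (rule sum.reindex_bij_witness[of _ "\<lambda>u. restrict (\<lambda>x. u (inv_into P h x)) (h ` P)"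
          "\<lambda>a. restrict (\<lambda>k. a (h k)) P"])
  fix a :: "'i \<Rightarrow> bool" assume a: "a \<in> PiE (h ` P) (\<lambda>_. UNIV)"
  show "restrict (\<lambda>x. restrict (\<lambda>k. a (h k)) P (inv_into P h x)) (h ` P) = a"
    using a assms(1) by (auto simp: PiE_def extensional_def restrict_def fun_eq_iff inv_into_into)
  have "Qp q (h ` P) a = Qp q P (restrict (\<lambda>k. a (h k)) P)"
    unfolding Qp_def using assms(1) by (subst prod.reindex) auto
  moreover have "\<psi> (\<lambda>k. a (h k)) = \<psi> (restrict (\<lambda>k. a (h k)) P)"
    by (rule dep) auto
  ultimately show "Qp q P (restrict (\<lambda>k. a (h k)) P) * \<psi> (restrict (\<lambda>k. a (h k)) P) =
         Qp q (h ` P) a * \<psi> (\<lambda>k. a (h k))" by simp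
qed (use assms(1) in \<open>auto simp: PiE_def extensional_def restrict_def fun_eq_iff\<close>)

text \<open>Functions of pairwise disjoint blocks of coordinates are independent.\<close>

lemma sum_Qp_PiE_prod_blocks:
  fixes h :: "'t \<Rightarrow> 'p \<Rightarrow> 'i" and \<phi> :: "'t \<Rightarrow> ('p \<Rightarrow> bool) \<Rightarrow> real"
  assumes "finite Ts" "finite I"
    and inj: "\<And>t. t \<in> Ts \<Longrightarrow> inj_on (h t) P"
    and sub: "\<And>t. t \<in> Ts \<Longrightarrow> h t ` P \<subseteq> I"
    and disj: "\<And>t t'. t \<in> Ts \<Longrightarrow> t' \<in> Ts \<Longrightarrow> t \<noteq> t' \<Longrightarrow> h t ` P \<inter> h t' ` P = {}"
    and dep: "\<And>t u u'. (\<forall>k\<in>P. u k = u' k) \<Longrightarrow> \<phi> t u = \<phi> t u'"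
  shows "(\<Sum>X\<in>PiE I (\<lambda>_. UNIV). Qp q I X * (\<Prod>t\<in>Ts. \<phi> t (\<lambda>k. X (h t k))))
       = (\<Prod>t\<in>Ts. \<Sum>u\<in>PiE P (\<lambda>_. UNIV). Qp q P u * \<phi> t u)"
  using assms(1,2) inj sub disj
proof (induction Ts arbitrary: I rule: finite_induct)
  case empty
  then show ?case by (simp add: sum_Qp_PiE)
next
  case (insert t0 Ts)
  define H where "H = h t0 ` P"
  define R where "R = I - H"
  have I: "I = H \<union> R" "H \<inter> R = {}" using insert.prems(3) unfolding R_def H_def by auto
  have fin: "finite H" "finite R" using insert.prems(1) I by (metis finite_Un)+
  have R: "h t ` P \<subseteq> R" if "t \<in> Ts" for t
    using insert.prems(3,4)[of t] insert.prems(4)[of t t0] insert.hyps that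
    unfolding R_def H_def by auto
  have "(\<Sum>X\<in>PiE I (\<lambda>_. UNIV). Qp q I X * (\<Prod>t\<in>insert t0 Ts. \<phi> t (\<lambda>k. X (h t k))))
      = (\<Sum>a\<in>PiE H (\<lambda>_. UNIV). Qp q H a * \<phi> t0 (\<lambda>k. a (h t0 k))) *
        (\<Sum>b\<in>PiE R (\<lambda>_. UNIV). Qp q R b * (\<Prod>t\<in>Ts. \<phi> t (\<lambda>k. b (h t k))))"
    unfolding I(1) prod.insert[OF insert.hyps]
  proof (rule sum_Qp_PiE_Un_mult[OF fin I(2)])
    show "\<phi> t0 (\<lambda>k. X (h t0 k)) = \<phi> t0 (\<lambda>k. X' (h t0 k))" if "\<forall>i\<in>H. X i = X' i" for X X'
      using that by (intro dep) (auto simp: H_def)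
    show "(\<Prod>t\<in>Ts. \<phi> t (\<lambda>k. X (h t k))) = (\<Prod>t\<in>Ts. \<phi> t (\<lambda>k. X' (h t k)))"
      if "\<forall>i\<in>R. X i = X' i" for X X'
      using that R by (intro prod.cong refl dep) blast
  qed
  also have "(\<Sum>a\<in>PiE H (\<lambda>_. UNIV). Qp q H a * \<phi> t0 (\<lambda>k. a (h t0 k)))
      = (\<Sum>u\<in>PiE P (\<lambda>_. UNIV). Qp q P u * \<phi> t0 u)"
    unfolding H_def by (rule sum_Qp_PiE_reindex) (use insert.prems dep in auto)
  also have "(\<Sum>b\<in>PiE R (\<lambda>_. UNIV). Qp q R b * (\<Prod>t\<in>Ts. \<phi> t (\<lambda>k. b (h t k))))
      = (\<Prod>t\<in>Ts. \<Sum>u\<in>PiE P (\<lambda>_. UNIV). Qp q P u * \<phi> t u)"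
    using insert.prems R by (intro insert.IH fin(2)) auto
  finally show ?case using insert.hyps by simp
qed

lemma sum_Qp_PiE_prod_columns:
  fixes f :: "'p \<Rightarrow> 'i" and \<phi> :: "nat \<Rightarrow> ('p \<Rightarrow> bool) \<Rightarrow> real" and T :: nat
  assumes "finite I" "inj_on f P" "\<And>k t. k \<in> P \<Longrightarrow> t < T \<Longrightarrow> (f k, t) \<in> I"
    and "\<And>t u u'. (\<forall>k\<in>P. u k = u' k) \<Longrightarrow> \<phi> t u = \<phi> t u'"
  shows "(\<Sum>X\<in>PiE I (\<lambda>_. UNIV). Qp q I X * (\<Prod>t<T. \<phi> t (\<lambda>k. X (f k, t))))
       = (\<Prod>t<T. \<Sum>u\<in>PiE P (\<lambda>_. UNIV). Qp q P u * \<phi> t u)"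
  by (rule sum_Qp_PiE_prod_blocks[where h="\<lambda>t k. (f k, t)"]) (use assms in \<open>auto simp: inj_on_def\<close>)

section \<open>Elementary inequalities and derivatives\<close>

lemma powr_le_affine:
  fixes x \<rho> :: real
  assumes "x \<ge> 0" "0 < \<rho>" "\<rho> \<le> 1"
  shows "x powr \<rho> \<le> \<rho> * x + (1 - \<rho>)"
proof (cases "x = 0")
  case True then show ?thesis using assms by simp
next
  case False
  then show ?thesis using Youngs_inequality_0[of \<rho> "1-\<rho>" x 1] assms by simp
qed

text \<open>Jensen's inequality for the concave map \<open>x powr \<rho>\<close>, via the tangent line at the mean.\<close>

lemma sum_mult_powr_le_powr_sum:
  fixes p h :: "'a \<Rightarrow> real"
  assumes "finite I" "\<And>i. i \<in> I \<Longrightarrow> p i \<ge> 0" "\<And>i. i \<in> I \<Longrightarrow> h i \<ge> 0"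
    "(\<Sum>i\<in>I. p i) = 1" "0 < \<rho>" "\<rho> \<le> 1"
  shows "(\<Sum>i\<in>I. p i * h i powr \<rho>) \<le> (\<Sum>i\<in>I. p i * h i) powr \<rho>"
proof -
  define m where "m = (\<Sum>i\<in>I. p i * h i)"
  have m0: "m \<ge> 0" unfolding m_def using assms by (intro sum_nonneg) auto
  show ?thesis
  proof (cases "m = 0")
    case True
    have each: "p i * h i = 0" if "i \<in> I" for i
      using True assms that unfolding m_def by (subst (asm) sum_nonneg_eq_0_iff) auto
    have "(\<Sum>i\<in>I. p i * h i powr \<rho>) = 0"
      by (rule sum.neutral) (use each in auto)
    then show ?thesis by simp
  next
    case False
    then have mp: "m > 0" using m0 by simp
    have "p i * h i powr \<rho> \<le> p i * (m powr \<rho> * (\<rho> * (h i / m) + (1 - \<rho>)))" if "i \<in> I" for i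
    proof (rule mult_left_mono)
      have "(h i / m) powr \<rho> \<le> \<rho> * (h i / m) + (1 - \<rho>)"
        using powr_le_affine[of "h i / m" \<rho>] assms that mp by simp
      moreover have "(h i / m) powr \<rho> = h i powr \<rho> / m powr \<rho>"
        using assms that mp by (simp add: powr_divide)
      ultimately show "h i powr \<rho> \<le> m powr \<rho> * (\<rho> * (h i / m) + (1 - \<rho>))"
        using mp by (simp add: divide_le_eq mult.commute)
      show "0 \<le> p i" using assms that by simp
    qed
    then have "(\<Sum>i\<in>I. p i * h i powr \<rho>) \<le> (\<Sum>i\<in>I. p i * (m powr \<rho> * (\<rho> * (h i / m) + (1 - \<rho>))))"
      by (rule sum_mono)
    also have "\<dots> = (\<Sum>i\<in>I. (m powr \<rho> * (\<rho> / m)) * (p i * h i) + (m powr \<rho> * (1 - \<rho>)) * p i)"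
      by (intro sum.cong refl) (simp add: algebra_simps)
    also have "\<dots> = (m powr \<rho> * (\<rho> / m)) * m + (m powr \<rho> * (1 - \<rho>)) * (\<Sum>i\<in>I. p i)"
      unfolding m_def by (simp add: sum.distrib sum_distrib_left)
    also have "\<dots> = m powr \<rho>"
      using mp assms(4) by (simp add: algebra_simps)
    finally show ?thesis unfolding m_def .
  qed
qed

text \<open>Gallager's counting bound: the indicator of \<open>Lt \<le> Ls j\<close> is at most
  \<open>(Ls j / Lt) powr (1/(1+\<rho>))\<close>.\<close>

lemma count_ge_powr_le:
  fixes Lt :: real and Ls :: "'a \<Rightarrow> real"
  assumes "finite C" "Lt \<ge> 0" "\<And>j. j \<in> C \<Longrightarrow> Ls j \<ge> 0" "0 < \<rho>" "\<rho> \<le> 1"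
  shows "Lt * (\<Sum>j\<in>C. if Ls j \<ge> Lt then 1 else 0) powr \<rho>
     \<le> Lt powr (1/(1+\<rho>)) * (\<Sum>j\<in>C. Ls j powr (1/(1+\<rho>))) powr \<rho>"
proof (cases "Lt = 0")
  case True then show ?thesis by simp
next
  case False
  then have lp: "Lt > 0" using assms by simp
  define s where "s = 1/(1+\<rho>)"
  have sp: "s > 0" unfolding s_def using assms by simp
  have ind: "(if Ls j \<ge> Lt then 1 else 0) \<le> Ls j powr s / Lt powr s" if "j \<in> C" for j
  proof (cases "Ls j \<ge> Lt")
    case True
    then have "Lt powr s \<le> Ls j powr s" using lp sp by (intro powr_mono2) auto
    then show ?thesis using True lp by simp
  qed (use lp in simp)
  have "(\<Sum>j\<in>C. if Ls j \<ge> Lt then 1 else 0) \<le> (\<Sum>j\<in>C. Ls j powr s) / Lt powr s"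
    unfolding sum_divide_distrib by (rule sum_mono) (rule ind)
  then have "(\<Sum>j\<in>C. if Ls j \<ge> Lt then 1 else (0::real)) powr \<rho> \<le> ((\<Sum>j\<in>C. Ls j powr s) / Lt powr s) powr \<rho>"
    using assms by (intro powr_mono2) (auto intro: sum_nonneg)
  also have "\<dots> = (\<Sum>j\<in>C. Ls j powr s) powr \<rho> / Lt powr (s * \<rho>)"
    using lp by (simp add: powr_divide powr_powr sum_nonneg)
  finally have "Lt * (\<Sum>j\<in>C. if Ls j \<ge> Lt then 1 else (0::real)) powr \<rho>
      \<le> Lt * ((\<Sum>j\<in>C. Ls j powr s) powr \<rho> / Lt powr (s * \<rho>))"
    using lp by (intro mult_left_mono) auto
  also have "\<dots> = Lt powr (1 - s * \<rho>) * (\<Sum>j\<in>C. Ls j powr s) powr \<rho>"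
    using lp by (simp add: powr_diff)
  also have "1 - s * \<rho> = s" unfolding s_def using assms by (simp add: field_simps)
  finally show ?thesis unfolding s_def .
qed

lemma DERIV_powr_inverse_one_plus:
  fixes w :: real assumes "w \<ge> 0"
  shows "((\<lambda>\<rho>. w powr (1/(1+\<rho>))) has_real_derivative (-(w * ln w))) (at 0)"
proof (cases "w = 0")
  case True
  then show ?thesis by simp
next
  case False
  then have wp: "w > 0" using assms by simp
  have d: "((\<lambda>\<rho>::real. 1/(1+\<rho>)) has_real_derivative (-1)) (at 0)"
    by (auto intro!: derivative_eq_intros)
  have "((\<lambda>\<rho>. w powr (1/(1+\<rho>))) has_real_derivative
      (w powr (1/(1+0)) * ((-1) * ln w + 0 * (1/(1+0)) / w))) (at 0)"
    using DERIV_powr[OF DERIV_const wp d] by simp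
  then show ?thesis using wp by simp
qed

lemma DERIV_sum_powr_one_plus:
  fixes c w :: "'u \<Rightarrow> real"
  assumes "finite U" "\<And>u. u \<in> U \<Longrightarrow> c u \<ge> 0" "\<And>u. u \<in> U \<Longrightarrow> w u \<ge> 0"
  shows "((\<lambda>\<rho>. (\<Sum>u\<in>U. c u * w u powr (1/(1+\<rho>))) powr (1+\<rho>)) has_real_derivative
     ((\<Sum>u\<in>U. c u * w u) * ln (\<Sum>u\<in>U. c u * w u) - (\<Sum>u\<in>U. c u * (w u * ln (w u))))) (at 0)"
proof -
  define G where "G = (\<lambda>\<rho>. \<Sum>u\<in>U. c u * w u powr (1/(1+\<rho>)))"
  define G0 where "G0 = (\<Sum>u\<in>U. c u * w u)"
  define G1 where "G1 = (\<Sum>u\<in>U. c u * (-(w u * ln (w u))))"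
  have G00: "G 0 = G0" unfolding G_def G0_def using assms(3) by (intro sum.cong) auto
  have dG: "(G has_real_derivative G1) (at 0)"
    unfolding G_def G1_def
    by (intro DERIV_sum DERIV_cmult DERIV_powr_inverse_one_plus assms(3))
  have G1': "G1 = - (\<Sum>u\<in>U. c u * (w u * ln (w u)))"
    unfolding G1_def by (simp add: sum_negf)
  show ?thesis
  proof (cases "G0 > 0")
    case True
    have d1: "((\<lambda>\<rho>::real. 1+\<rho>) has_real_derivative 1) (at 0)"
      by (auto intro!: derivative_eq_intros)
    have "((\<lambda>\<rho>. G \<rho> powr (1+\<rho>)) has_real_derivative G0 * (ln G0 + G1 / G0)) (at 0)"
      using DERIV_powr[OF dG _ d1] True G00 by simp
    also have "G0 * (ln G0 + G1 / G0) = G0 * ln G0 - (\<Sum>u\<in>U. c u * (w u * ln (w u)))"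
      using True unfolding G1' by (simp add: field_simps)
    finally show ?thesis unfolding G_def G0_def .
  next
    case False
    have "G0 \<ge> 0" unfolding G0_def using assms by (intro sum_nonneg mult_nonneg_nonneg) auto
    then have G0z: "G0 = 0" using False by simp
    have each: "c u * w u = 0" if "u \<in> U" for u
      using G0z assms that unfolding G0_def
      by (subst (asm) sum_nonneg_eq_0_iff) auto
    have "G \<rho> = 0" for \<rho>
      unfolding G_def by (rule sum.neutral) (use each in auto)
    moreover have "(\<Sum>u\<in>U. c u * (w u * ln (w u))) = 0"
      by (rule sum.neutral) (use each in \<open>auto simp: mult.assoc[symmetric]\<close>)
    ultimately show ?thesis using G0z unfolding G_def G0_def by simp
  qed
qed

section \<open>Gallager's function of a split of the defective positions\<close>

definition join_input :: "nat set \<Rightarrow> nat set \<Rightarrow> (nat \<Rightarrow> bool) \<Rightarrow> (nat \<Rightarrow> bool) \<Rightarrow> nat \<Rightarrow> bool" where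
  "join_input A B u v = (\<lambda>j. if j \<in> A then u j else if j \<in> B then v j else False)"

lemma join_input_cong:
  "(\<forall>k\<in>A. u k = u' k) \<Longrightarrow> (\<forall>k\<in>B. v k = v' k) \<Longrightarrow> join_input A B u v = join_input A B u' v'"
  unfolding join_input_def by (auto simp: fun_eq_iff)

text \<open>For the split \<open>(A, B)\<close> of the defective positions, \<open>gallager_fun q W A B \<rho>\<close> is
  \<open>2 powr (- E\<^sub>0(\<rho>))\<close> for Gallager's exponent \<open>E\<^sub>0\<close> of the channel from \<open>X\<^sub>A\<close> to \<open>Y\<close> with
  \<open>X\<^sub>B\<close> as side information.\<close>

definition gallager_inner :: "real \<Rightarrow> ((nat \<Rightarrow> bool) \<Rightarrow> 'y \<Rightarrow> real) \<Rightarrow> nat set \<Rightarrow> nat set \<Rightarrow> real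
   \<Rightarrow> (nat \<Rightarrow> bool) \<Rightarrow> 'y \<Rightarrow> real" where
  "gallager_inner q W A B \<rho> v y =
     (\<Sum>u\<in>PiE A (\<lambda>_. UNIV). Qp q A u * W (join_input A B u v) y powr (1/(1+\<rho>)))"

definition gallager_fun :: "real \<Rightarrow> ((nat \<Rightarrow> bool) \<Rightarrow> 'y::finite \<Rightarrow> real) \<Rightarrow> nat set \<Rightarrow> nat set
   \<Rightarrow> real \<Rightarrow> real" where
  "gallager_fun q W A B \<rho> =
     (\<Sum>v\<in>PiE B (\<lambda>_. UNIV). \<Sum>y\<in>UNIV. Qp q B v * gallager_inner q W A B \<rho> v y powr (1+\<rho>))"

definition cond_out :: "real \<Rightarrow> ((nat \<Rightarrow> bool) \<Rightarrow> 'y \<Rightarrow> real) \<Rightarrow> nat set \<Rightarrow> nat set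
   \<Rightarrow> (nat \<Rightarrow> bool) \<Rightarrow> 'y \<Rightarrow> real" where
  "cond_out q W A B v y = (\<Sum>u\<in>PiE A (\<lambda>_. UNIV). Qp q A u * W (join_input A B u v) y)"

definition gallager_slope :: "real \<Rightarrow> ((nat \<Rightarrow> bool) \<Rightarrow> 'y::finite \<Rightarrow> real) \<Rightarrow> nat set \<Rightarrow> nat set
   \<Rightarrow> real" where
  "gallager_slope q W A B = (\<Sum>v\<in>PiE B (\<lambda>_. UNIV). \<Sum>y\<in>UNIV. Qp q B v *
     (cond_out q W A B v y * ln (cond_out q W A B v y) -
      (\<Sum>u\<in>PiE A (\<lambda>_. UNIV). Qp q A u * (W (join_input A B u v) y * ln (W (join_input A B u v) y)))))"

lemma gallager_inner_nonneg:
  assumes "0 \<le> q" "q \<le> 1"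
  shows "gallager_inner q W A B \<rho> v y \<ge> 0"
  unfolding gallager_inner_def using assms by (intro sum_nonneg mult_nonneg_nonneg Qp_nonneg) auto

lemma gallager_inner_cong:
  assumes "\<forall>k\<in>B. v k = v' k"
  shows "gallager_inner q W A B \<rho> v y = gallager_inner q W A B \<rho> v' y"
proof -
  have "join_input A B u v = join_input A B u v'" for u using assms by (intro join_input_cong) auto
  then show ?thesis unfolding gallager_inner_def by simp
qed

lemma gallager_fun_nonneg:
  assumes "0 \<le> q" "q \<le> 1"
  shows "gallager_fun q W A B \<rho> \<ge> 0"
  unfolding gallager_fun_def using assms by (intro sum_nonneg mult_nonneg_nonneg Qp_nonneg) auto

lemma gallager_fun_has_derivative:
  fixes W :: "(nat \<Rightarrow> bool) \<Rightarrow> 'y::finite \<Rightarrow> real"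
  assumes "finite A" "finite B" "0 \<le> q" "q \<le> 1" "\<forall>x y. W x y \<ge> 0"
  shows "(gallager_fun q W A B has_real_derivative gallager_slope q W A B) (at 0)"
  unfolding gallager_fun_def gallager_slope_def gallager_inner_def cond_out_def
  by (intro DERIV_sum DERIV_cmult DERIV_sum_powr_one_plus finite_PiE assms(1) Qp_nonneg assms(3,4)
        assms(5)[rule_format]) simp_all

lemma sum_cond_out:
  fixes W :: "(nat \<Rightarrow> bool) \<Rightarrow> 'y::finite \<Rightarrow> real"
  assumes "finite A" "\<forall>x. (\<Sum>y\<in>UNIV. W x y) = 1"
  shows "(\<Sum>y\<in>UNIV. cond_out q W A B v y) = 1"
  unfolding cond_out_def using assms
  by (subst sum.swap) (simp add: sum_distrib_left[symmetric] sum_Qp_PiE)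

lemma gallager_fun_0:
  fixes W :: "(nat \<Rightarrow> bool) \<Rightarrow> 'y::finite \<Rightarrow> real"
  assumes "finite A" "finite B" "\<forall>x y. W x y \<ge> 0" "\<forall>x. (\<Sum>y\<in>UNIV. W x y) = 1"
    "0 \<le> q" "q \<le> 1"
  shows "gallager_fun q W A B 0 = 1"
proof -
  have "gallager_inner q W A B 0 v y powr (1+0) = cond_out q W A B v y" for v y
  proof -
    have "gallager_inner q W A B 0 v y = cond_out q W A B v y"
      unfolding gallager_inner_def cond_out_def using assms(3) by (intro sum.cong) auto
    moreover have "cond_out q W A B v y \<ge> 0"
      unfolding cond_out_def using assms by (intro sum_nonneg mult_nonneg_nonneg Qp_nonneg) auto
    ultimately show ?thesis by simp
  qed
  then have "gallager_fun q W A B 0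
      = (\<Sum>v\<in>PiE B (\<lambda>_. UNIV). Qp q B v * (\<Sum>y\<in>UNIV. cond_out q W A B v y))"
    unfolding gallager_fun_def by (simp add: sum_distrib_left)
  also have "\<dots> = 1" using assms by (simp add: sum_cond_out sum_Qp_PiE)
  finally show ?thesis .
qed

lemma gallager_fun_eq_joint_sum:
  fixes W :: "(nat \<Rightarrow> bool) \<Rightarrow> 'y::finite \<Rightarrow> real"
  assumes "A \<subseteq> {..<K}" "B = {..<K} - A" "0 \<le> q" "q \<le> 1"
  shows "(\<Sum>y\<in>UNIV. \<Sum>x\<in>PiE {..<K} (\<lambda>_. UNIV). Qp q {..<K} x *
      (W (join_input A B x x) y powr (1/(1+\<rho>)) * gallager_inner q W A B \<rho> x y powr \<rho>))
    = gallager_fun q W A B \<rho>"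
proof -
  have fin: "finite A" "finite B" using assms(1,2) finite_subset by auto
  have KAB: "{..<K} = A \<union> B" "A \<inter> B = {}" using assms by auto
  have "(\<Sum>x\<in>PiE {..<K} (\<lambda>_. UNIV). Qp q {..<K} x *
      (W (join_input A B x x) y powr (1/(1+\<rho>)) * gallager_inner q W A B \<rho> x y powr \<rho>))
    = (\<Sum>u\<in>PiE A (\<lambda>_. UNIV). Qp q A u * (\<Sum>v\<in>PiE B (\<lambda>_. UNIV). Qp q B v *
      (W (join_input A B u v) y powr (1/(1+\<rho>)) * gallager_inner q W A B \<rho> v y powr \<rho>)))" for y
    unfolding KAB(1)
  proof (rule sum_Qp_PiE_Un[OF fin KAB(2)])
    fix u u' v :: "nat \<Rightarrow> bool" assume "\<forall>i\<in>A. u i = u' i"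
    then have "join_input A B u v = join_input A B u' v" by (intro join_input_cong) auto
    then show "W (join_input A B u v) y powr (1/(1+\<rho>)) * gallager_inner q W A B \<rho> v y powr \<rho>
        = W (join_input A B u' v) y powr (1/(1+\<rho>)) * gallager_inner q W A B \<rho> v y powr \<rho>"
      by simp
  next
    fix u v v' :: "nat \<Rightarrow> bool" assume v: "\<forall>j\<in>B. v j = v' j"
    then have "join_input A B u v = join_input A B u v'" by (intro join_input_cong) auto
    then show "W (join_input A B u v) y powr (1/(1+\<rho>)) * gallager_inner q W A B \<rho> v y powr \<rho>
        = W (join_input A B u v') y powr (1/(1+\<rho>)) * gallager_inner q W A B \<rho> v' y powr \<rho>"
      using gallager_inner_cong[OF v, of q W A \<rho> y] by simp
  qed
  also have "\<dots> y = (\<Sum>v\<in>PiE B (\<lambda>_. UNIV). Qp q B v *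
      (\<Sum>u\<in>PiE A (\<lambda>_. UNIV). Qp q A u * W (join_input A B u v) y powr (1/(1+\<rho>))) *
      gallager_inner q W A B \<rho> v y powr \<rho>)" for y
    unfolding sum_distrib_left sum_distrib_right by (subst sum.swap) (simp add: mult_ac)
  also have "\<dots> y = (\<Sum>v\<in>PiE B (\<lambda>_. UNIV).
      Qp q B v * gallager_inner q W A B \<rho> v y * gallager_inner q W A B \<rho> v y powr \<rho>)" for y
    by (simp add: gallager_inner_def)
  also have "\<dots> y = (\<Sum>v\<in>PiE B (\<lambda>_. UNIV). Qp q B v * gallager_inner q W A B \<rho> v y powr (1+\<rho>))"
    for y
  proof -
    have "gallager_inner q W A B \<rho> v y * gallager_inner q W A B \<rho> v y powr \<rho>
        = gallager_inner q W A B \<rho> v y powr (1+\<rho>)" for v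
      using gallager_inner_nonneg[OF assms(3,4), of W A B \<rho> v y]
      by (cases "gallager_inner q W A B \<rho> v y = 0") (simp_all add: powr_add)
    then show ?thesis by (simp add: mult.assoc)
  qed
  finally show ?thesis unfolding gallager_fun_def by (subst sum.swap) simp
qed

lemma finite_mi_eq_sum:
  "finite_mi U V P =
     (\<Sum>u\<in>U. \<Sum>v\<in>V. P u v * log 2 (P u v / ((\<Sum>v'\<in>V. P u v') * (\<Sum>u'\<in>U. P u' v))))"
  unfolding finite_mi_def by (intro sum.cong refl) simp

text \<open>Where \<open>Qp q A u * W > 0\<close> also \<open>cond_out > 0\<close>, so the logarithm of the quotient
  splits; all other terms vanish.\<close>

lemma mi_split_eq_sum_ln:
  fixes W :: "(nat \<Rightarrow> bool) \<Rightarrow> 'y::finite \<Rightarrow> real"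
  assumes "finite A" "\<forall>x y. W x y \<ge> 0" "\<forall>x. (\<Sum>y\<in>UNIV. W x y) = 1" "0 \<le> q" "q \<le> 1"
    and B: "B = {..<K} - A"
  shows "mi_split q K W A * ln 2 =
    (\<Sum>u\<in>PiE A (\<lambda>_. UNIV). \<Sum>v\<in>PiE B (\<lambda>_. UNIV). \<Sum>y\<in>UNIV.
       Qp q A u * Qp q B v * W (join_input A B u v) y *
         (ln (W (join_input A B u v) y) - ln (cond_out q W A B v y)))"
proof -
  define U where "U = PiE A (\<lambda>_. UNIV::bool set)"
  define V where "V = PiE B (\<lambda>_. UNIV::bool set)"
  define P where "P = (\<lambda>u (v, y). Qp q A u * Qp q B v * W (join_input A B u v) (y::'y))"
  have finB: "finite B" unfolding B by auto
  have mi: "mi_split q K W A = finite_mi U (V \<times> UNIV) P"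
    unfolding mi_split_def Let_def B[symmetric] U_def V_def P_def join_input_def ..
  have marg_u: "(\<Sum>p\<in>V \<times> UNIV. P u p) = Qp q A u" for u
    unfolding P_def V_def sum.cartesian_product[symmetric] using assms(3) finB
    by (simp add: sum_distrib_left[symmetric] sum_distrib_right[symmetric] sum_Qp_PiE)
  have marg_vy: "(\<Sum>u\<in>U. P u (v, y)) = Qp q B v * cond_out q W A B v y" for v y
    unfolding P_def cond_out_def U_def by (simp add: sum_distrib_left mult_ac)
  have pointwise: "P u (v, y) * log 2 (P u (v, y) / (Qp q A u * (Qp q B v * cond_out q W A B v y))) * ln 2
      = Qp q A u * Qp q B v * W (join_input A B u v) y *
          (ln (W (join_input A B u v) y) - ln (cond_out q W A B v y))"
    if "u \<in> U" for u v y
  proof -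
    let ?w = "W (join_input A B u v) y" and ?g = "cond_out q W A B v y"
    consider "Qp q A u * Qp q B v * ?w = 0" | "Qp q A u > 0" "Qp q B v > 0" "?w > 0"
      using Qp_nonneg[OF assms(4,5)] assms(2) by (metis less_eq_real_def mult_eq_0_iff)
    then show ?thesis
    proof cases
      case 2
      have "Qp q A u * ?w \<le> ?g"
        unfolding cond_out_def using \<open>u \<in> U\<close> assms unfolding U_def
        by (intro member_le_sum[where f="\<lambda>u. Qp q A u * W (join_input A B u v) y"])
           (auto intro!: mult_nonneg_nonneg Qp_nonneg finite_PiE)
      then have "?g > 0" using 2 by (smt (verit) mult_pos_pos)
      then show ?thesis using 2 by (simp add: P_def log_def ln_div)
    qed (auto simp: P_def)
  qed
  have "mi_split q K W A * ln 2 = (\<Sum>u\<in>U. \<Sum>v\<in>V. \<Sum>y\<in>UNIV.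
      P u (v, y) * log 2 (P u (v, y) / (Qp q A u * (Qp q B v * cond_out q W A B v y))) * ln 2)"
  proof -
    have split_pair: "(\<Sum>p\<in>V \<times> UNIV. F p) = (\<Sum>v\<in>V. \<Sum>y\<in>UNIV. F (v, y))"
      for F :: "_ \<Rightarrow> real" by (simp add: sum.cartesian_product)
    show ?thesis
      unfolding mi finite_mi_eq_sum marg_u unfolding split_pair marg_vy sum_distrib_right ..
  qed
  also have "\<dots> = (\<Sum>u\<in>U. \<Sum>v\<in>V. \<Sum>y\<in>UNIV. Qp q A u * Qp q B v * W (join_input A B u v) y *
         (ln (W (join_input A B u v) y) - ln (cond_out q W A B v y)))"
    by (intro sum.cong refl pointwise)
  finally show ?thesis unfolding U_def V_def .
qed

lemma mi_split_eq_gallager_slope: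
  fixes W :: "(nat \<Rightarrow> bool) \<Rightarrow> 'y::finite \<Rightarrow> real"
  assumes "finite A" "\<forall>x y. W x y \<ge> 0" "\<forall>x. (\<Sum>y\<in>UNIV. W x y) = 1" "0 \<le> q" "q \<le> 1"
  shows "mi_split q K W A * ln 2 = - gallager_slope q W A ({..<K} - A)"
proof -
  define B where "B = {..<K} - A"
  have "mi_split q K W A * ln 2 =
    (\<Sum>v\<in>PiE B (\<lambda>_. UNIV). \<Sum>y\<in>UNIV. \<Sum>u\<in>PiE A (\<lambda>_. UNIV).
       Qp q A u * Qp q B v * W (join_input A B u v) y *
         (ln (W (join_input A B u v) y) - ln (cond_out q W A B v y)))"
    unfolding mi_split_eq_sum_ln[OF assms B_def]
    by (subst sum.swap) (simp add: sum.swap[of _ "PiE A (\<lambda>_. UNIV)" UNIV])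
  also have "\<dots> = - gallager_slope q W A B"
    unfolding gallager_slope_def cond_out_def
    by (simp add: algebra_simps sum_subtractf sum_distrib_left sum_distrib_right sum_negf[symmetric])
  finally show ?thesis unfolding B_def .
qed

text \<open>Since \<open>gallager_fun\<close> equals \<open>1\<close> at \<open>0\<close> with slope \<open>- ln 2 * I(X\<^sub>A; X\<^sub>B, Y)\<close>, it drops below
  any line of smaller slope immediately to the right of \<open>0\<close>.\<close>

lemma gallager_fun_le_line:
  fixes W :: "(nat \<Rightarrow> bool) \<Rightarrow> 'y::finite \<Rightarrow> real"
  assumes "finite A" "0 \<le> q" "q \<le> 1" "\<forall>x y. W x y \<ge> 0" "\<forall>x. (\<Sum>y\<in>UNIV. W x y) = 1"
    and c: "c < ln 2 * mi_split q K W A"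
  obtains \<rho> where "0 < \<rho>" "\<rho> \<le> 1" "gallager_fun q W A ({..<K} - A) \<rho> \<le> 1 - \<rho> * c"
proof -
  define F where "F = gallager_fun q W A ({..<K} - A)"
  have "((\<lambda>\<rho>. F \<rho> - (1 - \<rho> * c)) has_real_derivative gallager_slope q W A ({..<K} - A) + c) (at 0)"
    unfolding F_def using assms
    by (auto intro!: derivative_eq_intros gallager_fun_has_derivative)
  moreover have "gallager_slope q W A ({..<K} - A) + c < 0"
    using mi_split_eq_gallager_slope[OF assms(1,4,5,2,3), of K] c by (simp add: mult.commute)
  ultimately obtain d where d: "d > 0" "\<And>h. 0 < h \<Longrightarrow> h < d \<Longrightarrow> F h - (1 - h * c) < F 0 - 1"
    by (auto dest!: DERIV_neg_dec_right)
  have "F 0 = 1" unfolding F_def using assms by (intro gallager_fun_0) auto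
  moreover have h: "0 < min (d/2) 1" "min (d/2) 1 < d" "min (d/2) 1 \<le> 1" using d(1) by auto
  ultimately show ?thesis using d(2)[OF h(1,2)] h by (intro that[of "min (d/2) 1"]) (auto simp: F_def)
qed

section \<open>Likelihoods of competing defective sets\<close>

text \<open>\<open>test_input\<close> enumerates a set in increasing order; by the symmetry of \<open>W\<close> any enumeration
  will do.\<close>

lemma W_test_input_bij:
  fixes W :: "(nat \<Rightarrow> bool) \<Rightarrow> 'y \<Rightarrow> real"
  assumes sym: "\<forall>\<pi> x y. \<pi> permutes {..<K} \<longrightarrow> W (x \<circ> \<pi>) y = W x y"
    and f': "bij_betw f' {..<K} S'"
  shows "W (test_input S' X t) y = W (\<lambda>k. if k < K then X (f' k, t) else False) y"
proof -
  have finS: "finite S'" using f' bij_betw_finite by blast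
  have cS: "card S' = K" using f' by (simp add: bij_betw_same_card[symmetric])
  define f0 where "f0 = (!) (sorted_list_of_set S')"
  have f0: "bij_betw f0 {..<K} S'"
    unfolding f0_def by (rule bij_betw_nth) (use finS cS in auto)
  define \<pi> where "\<pi> = (\<lambda>k. if k < K then inv_into {..<K} f0 (f' k) else k)"
  have "bij_betw (inv_into {..<K} f0 \<circ> f') {..<K} {..<K}"
    by (rule bij_betw_trans[OF f' bij_betw_inv_into[OF f0]])
  then have "bij_betw \<pi> {..<K} {..<K}"
    by (rule bij_betw_cong[THEN iffD1, rotated]) (auto simp: \<pi>_def)
  then have perm: "\<pi> permutes {..<K}"
    by (rule bij_imp_permutes) (auto simp: \<pi>_def)
  have eq: "test_input S' X t \<circ> \<pi> = (\<lambda>k. if k < K then X (f' k, t) else False)"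
  proof
    fix k
    show "(test_input S' X t \<circ> \<pi>) k = (if k < K then X (f' k, t) else False)"
    proof (cases "k < K")
      case True
      have fk: "f' k \<in> S'" using f' True by (auto dest: bij_betwE)
      have "inv_into {..<K} f0 (f' k) < K"
        using bij_betw_inv_into[OF f0] fk by (auto dest: bij_betwE)
      moreover have "f0 (inv_into {..<K} f0 (f' k)) = f' k"
        using f0 fk by (simp add: bij_betw_def f_inv_into_f)
      ultimately show ?thesis using True unfolding test_input_def \<pi>_def f0_def cS by simp
    next
      case False
      then show ?thesis unfolding test_input_def \<pi>_def cS by simp
    qed
  qed
  show ?thesis using sym perm eq by metis
qed

lemma lik_eq_join_input:
  assumes "A \<subseteq> {..<K}" "B = {..<K} - A" "card S = K"
  shows "lik T W S X ys = (\<Prod>t<T. W (join_input A B (\<lambda>k. X (sorted_list_of_set S ! k, t))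
                                           (\<lambda>k. X (sorted_list_of_set S ! k, t))) (ys t))"
  unfolding lik_def test_input_def
proof (intro prod.cong refl arg_cong2[where f=W])
  show "(\<lambda>k. if k < card S then X (sorted_list_of_set S ! k, t) else False) =
    join_input A B (\<lambda>k. X (sorted_list_of_set S ! k, t)) (\<lambda>k. X (sorted_list_of_set S ! k, t))" for t
    using assms unfolding join_input_def by (auto simp: fun_eq_iff)
qed

lemma lik_replace_eq:
  fixes W :: "(nat \<Rightarrow> bool) \<Rightarrow> 'y \<Rightarrow> real"
  assumes sym: "\<forall>\<pi> x y. \<pi> permutes {..<K} \<longrightarrow> W (x \<circ> \<pi>) y = W x y"
    and f: "bij_betw f {..<K} S" and A: "A \<subseteq> {..<K}" "B = {..<K} - A"
    and g: "bij_betw g A S1" and disj: "S1 \<inter> S = {}"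
  shows "lik T W (f ` B \<union> S1) X ys = (\<Prod>t<T. W (join_input A B (\<lambda>k. X (g k, t)) (\<lambda>k. X (f k, t))) (ys t))"
proof -
  define f' where "f' = (\<lambda>k. if k \<in> A then g k else f k)"
  have b1: "bij_betw f' A S1" using g by (rule bij_betw_cong[THEN iffD1, rotated]) (simp add: f'_def)
  have "bij_betw f B (f ` B)" using f A by (intro bij_betw_subset[OF f]) auto
  then have b2: "bij_betw f' B (f ` B)"
    by (rule bij_betw_cong[THEN iffD1, rotated]) (use A in \<open>simp add: f'_def\<close>)
  have "f ` B \<subseteq> S" using f A by (auto dest: bij_betwE)
  then have "bij_betw f' (A \<union> B) (S1 \<union> f ` B)" using disj by (intro bij_betw_combine[OF b1 b2]) auto
  moreover have "A \<union> B = {..<K}" "S1 \<union> f ` B = f ` B \<union> S1" using A by auto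
  ultimately have bf': "bij_betw f' {..<K} (f ` B \<union> S1)" by simp
  show ?thesis unfolding lik_def
  proof (intro prod.cong refl)
    fix t
    have "W (test_input (f ` B \<union> S1) X t) (ys t) = W (\<lambda>k. if k < K then X (f' k, t) else False) (ys t)"
      by (rule W_test_input_bij[OF sym bf'])
    also have "(\<lambda>k. if k < K then X (f' k, t) else False) = join_input A B (\<lambda>k. X (g k, t)) (\<lambda>k. X (f k, t))"
      using A unfolding join_input_def f'_def by (auto simp: fun_eq_iff)
    finally show "W (test_input (f ` B \<union> S1) X t) (ys t) = W (join_input A B (\<lambda>k. X (g k, t)) (\<lambda>k. X (f k, t))) (ys t)" .
  qed
qed

lemma same_card_decomp:
  assumes f: "bij_betw f {..<K} S" and S'': "card S'' = K" "S'' \<noteq> S" "finite S''"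
  defines "A0 \<equiv> {k\<in>{..<K}. f k \<notin> S''}"
  shows "A0 \<noteq> {}" "card (S'' - S) = card A0" "S'' = f ` ({..<K} - A0) \<union> (S'' - S)"
proof -
  have finS: "finite S" using f bij_betw_finite by blast
  have img: "f ` ({..<K} - A0) = S \<inter> S''"
    using f unfolding A0_def bij_betw_def by auto
  show "S'' = f ` ({..<K} - A0) \<union> (S'' - S)" unfolding img by auto
  have inj: "inj_on f ({..<K} - A0)" using f unfolding bij_betw_def by (auto intro: inj_on_subset)
  have "card (S \<inter> S'') = card ({..<K} - A0)" unfolding img[symmetric] by (rule card_image[OF inj])
  also have "\<dots> = K - card A0" by (subst card_Diff_subset) (auto simp: A0_def)
  finally have c1: "card (S \<inter> S'') = K - card A0" .
  have "card S'' = card (S \<inter> S'') + card (S'' - S)"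
    using S''(3) by (metis Int_commute card_Int_Diff)
  moreover have "card A0 \<le> K" using card_mono[of "{..<K}" A0] unfolding A0_def by auto
  ultimately show "card (S'' - S) = card A0" using S''(1) c1 by simp
  show "A0 \<noteq> {}"
  proof
    assume "A0 = {}"
    then have "S \<subseteq> S''" using img f unfolding bij_betw_def by auto
    moreover have "card S = card S''" using f S''(1) by (simp add: bij_betw_same_card[symmetric])
    ultimately show False using S'' card_subset_eq by blast
  qed
qed

lemma ml_error_obtains_impostor:
  fixes W :: "(nat \<Rightarrow> bool) \<Rightarrow> 'y \<Rightarrow> real" and g :: "nat set \<Rightarrow> nat set \<Rightarrow> nat \<Rightarrow> nat"
  assumes sym: "\<forall>\<pi> x y. \<pi> permutes {..<K} \<longrightarrow> W (x \<circ> \<pi>) y = W x y"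
    and f: "bij_betw f {..<K} S"
    and g: "\<And>A S1. A \<subseteq> {..<K} \<Longrightarrow> S1 \<subseteq> {..<N} - S \<Longrightarrow> card S1 = card A \<Longrightarrow>
      bij_betw (g A S1) A S1"
    and err: "ml_error N T W S X ys"
  obtains A S1 where "A \<subseteq> {..<K}" "A \<noteq> {}" "S1 \<subseteq> {..<N} - S" "card S1 = card A"
    "lik T W S X ys \<le> (\<Prod>t<T. W (join_input A ({..<K} - A) (\<lambda>k. X (g A S1 k, t)) (\<lambda>k. X (f k, t))) (ys t))"
proof -
  obtain S' where S': "S' \<subseteq> {..<N}" "card S' = card S" "S' \<noteq> S" "lik T W S' X ys \<ge> lik T W S X ys"
    using err unfolding ml_error_def by blast
  have "finite S'" using S'(1) finite_subset by auto
  define A where "A = {k\<in>{..<K}. f k \<notin> S'}"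
  have cardS: "card S = K" using f by (simp add: bij_betw_same_card[symmetric])
  have "card S' = K" using S'(2) cardS by simp
  note A_props = same_card_decomp[OF f this S'(3) \<open>finite S'\<close>, folded A_def]
  have A: "A \<subseteq> {..<K}" "A \<noteq> {}" using A_props(1) unfolding A_def by auto
  have S1: "S' - S \<subseteq> {..<N} - S" "card (S' - S) = card A"
    using S'(1,2) A_props(2) cardS by auto
  have "lik T W (f ` ({..<K} - A) \<union> (S' - S)) X ys
      = (\<Prod>t<T. W (join_input A ({..<K} - A) (\<lambda>k. X (g A (S' - S) k, t)) (\<lambda>k. X (f k, t))) (ys t))"
    by (rule lik_replace_eq[OF sym f A(1) refl g[OF A(1) S1]]) auto
  then show ?thesis using that A S1 S'(4) unfolding A_props(3)[symmetric] by simp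
qed

text \<open>Here \<open>A\<close> ranges over the sets of positions of the defectives that are decoded wrongly.\<close>

lemma ml_error_le_gallager_sum:
  fixes W :: "(nat \<Rightarrow> bool) \<Rightarrow> 'y \<Rightarrow> real" and g :: "nat set \<Rightarrow> nat set \<Rightarrow> nat \<Rightarrow> nat"
    and \<rho> :: "nat set \<Rightarrow> real"
  assumes Wn: "\<forall>x y. W x y \<ge> 0" and sym: "\<forall>\<pi> x y. \<pi> permutes {..<K} \<longrightarrow> W (x \<circ> \<pi>) y = W x y"
    and f: "bij_betw f {..<K} S"
    and g: "\<And>A S1. A \<subseteq> {..<K} \<Longrightarrow> S1 \<subseteq> {..<N} - S \<Longrightarrow> card S1 = card A \<Longrightarrow>
      bij_betw (g A S1) A S1"
    and \<rho>: "\<And>A. A \<subseteq> {..<K} \<Longrightarrow> A \<noteq> {} \<Longrightarrow> 0 < \<rho> A \<and> \<rho> A \<le> 1"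
  shows "lik T W S X ys * (if ml_error N T W S X ys then 1 else 0)
    \<le> (\<Sum>A | A \<subseteq> {..<K} \<and> A \<noteq> {}. lik T W S X ys powr (1/(1+\<rho> A)) *
         (\<Sum>S1 | S1 \<subseteq> {..<N} - S \<and> card S1 = card A.
            (\<Prod>t<T. W (join_input A ({..<K} - A) (\<lambda>k. X (g A S1 k, t)) (\<lambda>k. X (f k, t))) (ys t))
              powr (1/(1+\<rho> A))) powr \<rho> A)"
    (is "_ \<le> (\<Sum>A | A \<subseteq> {..<K} \<and> A \<noteq> {}. ?term A)")
proof (cases "ml_error N T W S X ys")
  case False
  then show ?thesis by (simp add: sum_nonneg)
next
  case True
  let ?L = "lik T W S X ys" and ?C = "\<lambda>A. {S1. S1 \<subseteq> {..<N} - S \<and> card S1 = card A}"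
  let ?Ls = "\<lambda>A S1. \<Prod>t<T. W (join_input A ({..<K} - A) (\<lambda>k. X (g A S1 k, t)) (\<lambda>k. X (f k, t))) (ys t)"
  obtain A S1 where A: "A \<subseteq> {..<K}" "A \<noteq> {}" and S1: "S1 \<subseteq> {..<N} - S" "card S1 = card A"
    and ge: "?L \<le> ?Ls A S1"
    by (rule ml_error_obtains_impostor[OF sym f g True])
  have S1: "S1 \<in> ?C A" using S1 by simp
  have finC: "finite (?C A)" by (rule finite_subset[of _ "Pow {..<N}"]) auto
  have L0: "?L \<ge> 0" unfolding lik_def using Wn by (intro prod_nonneg) auto
  have "1 \<le> (\<Sum>S1'\<in>?C A. if ?Ls A S1' \<ge> ?L then 1 else (0::real))"
    using member_le_sum[OF S1, of "\<lambda>S1'. if ?Ls A S1' \<ge> ?L then 1 else (0::real)"] finC ge by simp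
  then have "?L \<le> ?L * (\<Sum>S1'\<in>?C A. if ?Ls A S1' \<ge> ?L then 1 else (0::real)) powr \<rho> A"
    using L0 \<rho>[OF A] by (simp add: ge_one_powr_ge_zero mult_le_cancel_left1)
  also have "\<dots> \<le> ?term A"
    using Wn \<rho>[OF A] by (intro count_ge_powr_le finC L0 prod_nonneg) auto
  also have "\<dots> \<le> (\<Sum>A | A \<subseteq> {..<K} \<and> A \<noteq> {}. ?term A)"
    using A by (intro member_le_sum) auto
  finally show ?thesis using True by simp
qed

section \<open>Averaging over the random design\<close>

lemma sum_Qp_PiE_impostor:
  fixes W :: "(nat \<Rightarrow> bool) \<Rightarrow> 'y \<Rightarrow> real" and g :: "nat \<Rightarrow> nat" and T :: nat
  assumes "\<forall>x y. W x y \<ge> 0" "finite J" "finite A" "inj_on g A"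
    and "\<And>k t. k \<in> A \<Longrightarrow> t < T \<Longrightarrow> (g k, t) \<in> J"
  shows "(\<Sum>b\<in>PiE J (\<lambda>_. UNIV). Qp q J b *
        (\<Prod>t<T. W (join_input A B (\<lambda>k. b (g k, t)) (v t)) (ys t)) powr (1/(1+\<rho>)))
       = (\<Prod>t<T. gallager_inner q W A B \<rho> (v t) (ys t))"
proof -
  have "(\<Sum>b\<in>PiE J (\<lambda>_. UNIV). Qp q J b *
          (\<Prod>t<T. (\<lambda>t u. W (join_input A B u (v t)) (ys t) powr (1/(1+\<rho>))) t (\<lambda>k. b (g k, t))))
      = (\<Prod>t<T. \<Sum>u\<in>PiE A (\<lambda>_. UNIV). Qp q A u * W (join_input A B u (v t)) (ys t) powr (1/(1+\<rho>)))"
  proof (rule sum_Qp_PiE_prod_columns[OF assms(2,4,5)])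
    show "W (join_input A B u (v t)) (ys t) powr (1/(1+\<rho>)) = W (join_input A B u' (v t)) (ys t) powr (1/(1+\<rho>))"
      if "\<forall>k\<in>A. u k = u' k" for t u u' using that by (subst join_input_cong[of A u u']) auto
  qed
  then show ?thesis using assms(1) by (simp add: prod_powr_distrib gallager_inner_def)
qed

lemma sum_Qp_PiE_impostors_powr_le:
  fixes W :: "(nat \<Rightarrow> bool) \<Rightarrow> 'y \<Rightarrow> real" and g :: "nat set \<Rightarrow> nat \<Rightarrow> nat" and T :: nat
  assumes Wn: "\<forall>x y. W x y \<ge> 0" and q: "0 \<le> q" "q \<le> 1" and "finite J" "finite A"
    and C: "\<And>S1. S1 \<in> C \<Longrightarrow> inj_on (g S1) A"
      "\<And>S1 k t. S1 \<in> C \<Longrightarrow> k \<in> A \<Longrightarrow> t < T \<Longrightarrow> (g S1 k, t) \<in> J"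
    and \<rho>: "0 < \<rho>" "\<rho> \<le> 1"
  shows "(\<Sum>b\<in>PiE J (\<lambda>_. UNIV). Qp q J b * (\<Sum>S1\<in>C.
        (\<Prod>t<T. W (join_input A B (\<lambda>k. b (g S1 k, t)) (v t)) (ys t)) powr (1/(1+\<rho>))) powr \<rho>)
    \<le> (real (card C) * (\<Prod>t<T. gallager_inner q W A B \<rho> (v t) (ys t))) powr \<rho>"
proof -
  let ?L = "\<lambda>b S1. (\<Prod>t<T. W (join_input A B (\<lambda>k. b (g S1 k, t)) (v t)) (ys t)) powr (1/(1+\<rho>))"
  have "(\<Sum>b\<in>PiE J (\<lambda>_. UNIV). Qp q J b * (\<Sum>S1\<in>C. ?L b S1) powr \<rho>)
      \<le> (\<Sum>b\<in>PiE J (\<lambda>_. UNIV). Qp q J b * (\<Sum>S1\<in>C. ?L b S1)) powr \<rho>"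
    using assms by (intro sum_mult_powr_le_powr_sum)
      (auto intro!: Qp_nonneg sum_nonneg finite_PiE simp: sum_Qp_PiE)
  also have "(\<Sum>b\<in>PiE J (\<lambda>_. UNIV). Qp q J b * (\<Sum>S1\<in>C. ?L b S1))
      = (\<Sum>S1\<in>C. \<Sum>b\<in>PiE J (\<lambda>_. UNIV). Qp q J b * ?L b S1)"
    by (simp add: sum_distrib_left sum.swap[of _ C])
  also have "\<dots> = real (card C) * (\<Prod>t<T. gallager_inner q W A B \<rho> (v t) (ys t))"
    using assms by (simp add: sum_Qp_PiE_impostor)
  finally show ?thesis .
qed

text \<open>The codewords of the impostors are independent of those of the true set; given the
  latter, Jensen moves the expectation over the former inside the \<open>\<rho>\<close>-th power, where it
  factorizes over the tests.\<close>

lemma expected_gallager_bound_given_output: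
  fixes W :: "(nat \<Rightarrow> bool) \<Rightarrow> 'y \<Rightarrow> real" and f :: "nat \<Rightarrow> nat"
    and g :: "nat set \<Rightarrow> nat \<Rightarrow> nat" and T :: nat
  assumes Wn: "\<forall>x y. W x y \<ge> 0" and q: "0 \<le> q" "q \<le> 1"
    and S: "S \<subseteq> {..<N}" "bij_betw f {..<K} S"
    and A: "A \<subseteq> {..<K}" "B = {..<K} - A"
    and C: "finite C" "\<And>S1. S1 \<in> C \<Longrightarrow> S1 \<subseteq> {..<N} - S \<and> bij_betw (g S1) A S1"
    and \<rho>: "0 < \<rho>" "\<rho> \<le> 1"
  shows "(\<Sum>X\<in>codebooks N T. Qp q ({..<N} \<times> {..<T}) X *
      ((\<Prod>t<T. W (join_input A B (\<lambda>k. X (f k, t)) (\<lambda>k. X (f k, t))) (ys t)) powr (1/(1+\<rho>)) *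
       (\<Sum>S1\<in>C. (\<Prod>t<T. W (join_input A B (\<lambda>k. X (g S1 k, t)) (\<lambda>k. X (f k, t))) (ys t))
          powr (1/(1+\<rho>))) powr \<rho>))
    \<le> real (card C) powr \<rho> * (\<Prod>t<T. \<Sum>x\<in>PiE {..<K} (\<lambda>_. UNIV). Qp q {..<K} x *
      (W (join_input A B x x) (ys t) powr (1/(1+\<rho>)) * gallager_inner q W A B \<rho> x (ys t) powr \<rho>))"
proof -
  define s where "s = 1/(1+\<rho>)"
  define I where "I = S \<times> {..<T}"
  define J where "J = ({..<N} - S) \<times> {..<T}"
  define lik_true where
    "lik_true = (\<lambda>a. \<Prod>t<T. W (join_input A B (\<lambda>k. a (f k, t)) (\<lambda>k. a (f k, t))) (ys t))"
  define lik_imp where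
    "lik_imp = (\<lambda>a b S1. \<Prod>t<T. W (join_input A B (\<lambda>k. b (g S1 k, t)) (\<lambda>k. a (f k, t))) (ys t))"
  define \<phi> where "\<phi> = (\<lambda>t x. W (join_input A B x x) (ys t) powr s * gallager_inner q W A B \<rho> x (ys t) powr \<rho>)"
  have finS: "finite S" using S(1) finite_subset by auto
  have IJ: "{..<N} \<times> {..<T} = I \<union> J" "I \<inter> J = {}" "finite I" "finite J"
    unfolding I_def J_def using S(1) finS by auto
  have fI: "(f k, t) \<in> I" if "k < K" "t < T" for k t
    using S(2) that unfolding I_def by (auto dest: bij_betwE)
  have gJ: "(g S1 k, t) \<in> J" if "S1 \<in> C" "k \<in> A" "t < T" for S1 k t
    using C(2)[OF that(1)] that(2,3) unfolding J_def by (auto dest: bij_betwE)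
  have split: "(\<Sum>X\<in>codebooks N T. Qp q ({..<N} \<times> {..<T}) X *
      (lik_true X powr s * (\<Sum>S1\<in>C. lik_imp X X S1 powr s) powr \<rho>))
    = (\<Sum>a\<in>PiE I (\<lambda>_. UNIV). Qp q I a * (\<Sum>b\<in>PiE J (\<lambda>_. UNIV). Qp q J b *
      (lik_true a powr s * (\<Sum>S1\<in>C. lik_imp a b S1 powr s) powr \<rho>)))"
    unfolding codebooks_def IJ(1)
  proof (rule sum_Qp_PiE_Un[OF IJ(3,4,2)])
    fix a a' b :: "nat \<times> nat \<Rightarrow> bool" assume a: "\<forall>i\<in>I. a i = a' i"
    have "lik_true a = lik_true a'" "lik_imp a b S1 = lik_imp a' b S1" for S1
      unfolding lik_true_def lik_imp_def using a fI A
      by (auto intro!: prod.cong arg_cong2[where f=W] join_input_cong)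
    then show "lik_true a powr s * (\<Sum>S1\<in>C. lik_imp a b S1 powr s) powr \<rho>
        = lik_true a' powr s * (\<Sum>S1\<in>C. lik_imp a' b S1 powr s) powr \<rho>" by simp
  next
    fix a b b' :: "nat \<times> nat \<Rightarrow> bool" assume b: "\<forall>j\<in>J. b j = b' j"
    have "lik_imp a b S1 = lik_imp a b' S1" if "S1 \<in> C" for S1
      unfolding lik_imp_def using b gJ[OF that]
      by (auto intro!: prod.cong arg_cong2[where f=W] join_input_cong)
    then show "lik_true a powr s * (\<Sum>S1\<in>C. lik_imp a b S1 powr s) powr \<rho>
        = lik_true a powr s * (\<Sum>S1\<in>C. lik_imp a b' S1 powr s) powr \<rho>" by simp
  qed
  have given_true: "(\<Sum>b\<in>PiE J (\<lambda>_. UNIV). Qp q J b *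
      (lik_true a powr s * (\<Sum>S1\<in>C. lik_imp a b S1 powr s) powr \<rho>))
    \<le> real (card C) powr \<rho> * (\<Prod>t<T. \<phi> t (\<lambda>k. a (f k, t)))" for a
  proof -
    have "lik_true a powr s *
        (\<Sum>b\<in>PiE J (\<lambda>_. UNIV). Qp q J b * (\<Sum>S1\<in>C. lik_imp a b S1 powr s) powr \<rho>)
      \<le> lik_true a powr s *
        (real (card C) * (\<Prod>t<T. gallager_inner q W A B \<rho> (\<lambda>k. a (f k, t)) (ys t))) powr \<rho>"
      unfolding lik_imp_def s_def using C(2) gJ finite_subset[OF A(1)]
      by (intro mult_left_mono sum_Qp_PiE_impostors_powr_le Wn q IJ(4) \<rho>) (auto simp: bij_betw_def)
    also have "\<dots> = real (card C) powr \<rho> * (\<Prod>t<T. \<phi> t (\<lambda>k. a (f k, t)))"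
      unfolding lik_true_def \<phi>_def using Wn q
      by (simp add: powr_mult prod_powr_distrib prod.distrib gallager_inner_nonneg prod_nonneg mult_ac)
    finally show ?thesis by (simp add: sum_distrib_left mult_ac)
  qed
  have "(\<Sum>X\<in>codebooks N T. Qp q ({..<N} \<times> {..<T}) X *
      (lik_true X powr s * (\<Sum>S1\<in>C. lik_imp X X S1 powr s) powr \<rho>))
    \<le> (\<Sum>a\<in>PiE I (\<lambda>_. UNIV). Qp q I a * (real (card C) powr \<rho> * (\<Prod>t<T. \<phi> t (\<lambda>k. a (f k, t)))))"
    unfolding split by (intro sum_mono mult_left_mono given_true Qp_nonneg q)
  also have "\<dots> = real (card C) powr \<rho> *
      (\<Sum>a\<in>PiE I (\<lambda>_. UNIV). Qp q I a * (\<Prod>t<T. \<phi> t (\<lambda>k. a (f k, t))))"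
    by (simp add: sum_distrib_left mult_ac)
  also have "(\<Sum>a\<in>PiE I (\<lambda>_. UNIV). Qp q I a * (\<Prod>t<T. \<phi> t (\<lambda>k. a (f k, t))))
      = (\<Prod>t<T. \<Sum>x\<in>PiE {..<K} (\<lambda>_. UNIV). Qp q {..<K} x * \<phi> t x)"
  proof (rule sum_Qp_PiE_prod_columns[OF IJ(3) _ fI])
    show "inj_on f {..<K}" using S(2) by (simp add: bij_betw_def)
    show "\<phi> t x = \<phi> t x'" if "\<forall>k\<in>{..<K}. x k = x' k" for t x x'
    proof -
      have "join_input A B x x = join_input A B x' x'" "gallager_inner q W A B \<rho> x y = gallager_inner q W A B \<rho> x' y"
        for y using that A by (auto intro!: join_input_cong gallager_inner_cong)
      then show ?thesis unfolding \<phi>_def by simp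
    qed
  qed simp
  finally show ?thesis unfolding lik_true_def lik_imp_def \<phi>_def s_def .
qed

lemma expected_gallager_bound:
  fixes W :: "(nat \<Rightarrow> bool) \<Rightarrow> 'y::finite \<Rightarrow> real" and f :: "nat \<Rightarrow> nat"
    and g :: "nat set \<Rightarrow> nat \<Rightarrow> nat" and T :: nat
  assumes Wn: "\<forall>x y. W x y \<ge> 0" and q: "0 \<le> q" "q \<le> 1"
    and S: "S \<subseteq> {..<N}" "bij_betw f {..<K} S"
    and A: "A \<subseteq> {..<K}" "B = {..<K} - A"
    and C: "finite C" "\<And>S1. S1 \<in> C \<Longrightarrow> S1 \<subseteq> {..<N} - S \<and> bij_betw (g S1) A S1"
    and \<rho>: "0 < \<rho>" "\<rho> \<le> 1"
  shows "(\<Sum>X\<in>codebooks N T. Qp q ({..<N} \<times> {..<T}) X * (\<Sum>ys\<in>PiE {..<T} (\<lambda>_. UNIV).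
      (\<Prod>t<T. W (join_input A B (\<lambda>k. X (f k, t)) (\<lambda>k. X (f k, t))) (ys t)) powr (1/(1+\<rho>)) *
      (\<Sum>S1\<in>C. (\<Prod>t<T. W (join_input A B (\<lambda>k. X (g S1 k, t)) (\<lambda>k. X (f k, t))) (ys t))
          powr (1/(1+\<rho>))) powr \<rho>))
    \<le> real (card C) powr \<rho> * gallager_fun q W A B \<rho> ^ T"
proof -
  define \<Psi> where "\<Psi> = (\<lambda>y. \<Sum>x\<in>PiE {..<K} (\<lambda>_. UNIV). Qp q {..<K} x *
      (W (join_input A B x x) y powr (1/(1+\<rho>)) * gallager_inner q W A B \<rho> x y powr \<rho>))"
  have "(\<Sum>X\<in>codebooks N T. Qp q ({..<N} \<times> {..<T}) X * (\<Sum>ys\<in>PiE {..<T} (\<lambda>_. UNIV).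
      (\<Prod>t<T. W (join_input A B (\<lambda>k. X (f k, t)) (\<lambda>k. X (f k, t))) (ys t)) powr (1/(1+\<rho>)) *
      (\<Sum>S1\<in>C. (\<Prod>t<T. W (join_input A B (\<lambda>k. X (g S1 k, t)) (\<lambda>k. X (f k, t))) (ys t))
          powr (1/(1+\<rho>))) powr \<rho>))
    = (\<Sum>ys\<in>PiE {..<T} (\<lambda>_. UNIV). \<Sum>X\<in>codebooks N T. Qp q ({..<N} \<times> {..<T}) X *
      ((\<Prod>t<T. W (join_input A B (\<lambda>k. X (f k, t)) (\<lambda>k. X (f k, t))) (ys t)) powr (1/(1+\<rho>)) *
      (\<Sum>S1\<in>C. (\<Prod>t<T. W (join_input A B (\<lambda>k. X (g S1 k, t)) (\<lambda>k. X (f k, t))) (ys t))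
          powr (1/(1+\<rho>))) powr \<rho>))"
    by (simp add: sum_distrib_left sum.swap[of _ "codebooks N T"])
  also have "\<dots> \<le> (\<Sum>ys\<in>PiE {..<T} (\<lambda>_. UNIV). real (card C) powr \<rho> * (\<Prod>t<T. \<Psi> (ys t)))"
    unfolding \<Psi>_def by (intro sum_mono expected_gallager_bound_given_output[OF Wn q S A C \<rho>])
  also have "\<dots> = real (card C) powr \<rho> * (\<Sum>y\<in>UNIV. \<Psi> y) ^ T"
    using prod_sum_PiE[of "{..<T}" "\<lambda>_. UNIV" "\<lambda>_ y. \<Psi> y"]
    by (simp add: sum_distrib_left[symmetric])
  also have "(\<Sum>y\<in>UNIV. \<Psi> y) = gallager_fun q W A B \<rho>"
    unfolding \<Psi>_def by (rule gallager_fun_eq_joint_sum[OF A q])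
  finally show ?thesis .
qed

lemma error_given_defective_set_le:
  fixes W :: "(nat \<Rightarrow> bool) \<Rightarrow> 'y::finite \<Rightarrow> real" and \<rho> :: "nat set \<Rightarrow> real"
  assumes Wn: "\<forall>x y. W x y \<ge> 0" and q: "0 \<le> q" "q \<le> 1"
    and sym: "\<forall>\<pi> x y. \<pi> permutes {..<K} \<longrightarrow> W (x \<circ> \<pi>) y = W x y"
    and S: "S \<subseteq> {..<N}" "card S = K"
    and \<rho>: "\<And>A. A \<subseteq> {..<K} \<Longrightarrow> A \<noteq> {} \<Longrightarrow> 0 < \<rho> A \<and> \<rho> A \<le> 1"
  shows "(\<Sum>X\<in>codebooks N T. Qp q ({..<N} \<times> {..<T}) X *
          (\<Sum>ys\<in>PiE {..<T} (\<lambda>_. UNIV). lik T W S X ys * (if ml_error N T W S X ys then 1 else 0)))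
     \<le> (\<Sum>A | A \<subseteq> {..<K} \<and> A \<noteq> {}.
           real ((N - K) choose card A) powr \<rho> A * gallager_fun q W A ({..<K} - A) (\<rho> A) ^ T)"
proof -
  define f where "f = (!) (sorted_list_of_set S)"
  define C where "C = (\<lambda>A::nat set. {S1. S1 \<subseteq> {..<N} - S \<and> card S1 = card A})"
  have finS: "finite S" using S(1) finite_subset by auto
  have f: "bij_betw f {..<K} S" unfolding f_def by (rule bij_betw_nth) (use finS S in auto)
  have finC: "finite (C A)" for A unfolding C_def by (rule finite_subset[of _ "Pow {..<N}"]) auto
  have cardC: "card (C A) = (N - K) choose card A" for A
    using n_subsets[of "{..<N} - S" "card A"] S finS unfolding C_def by (simp add: card_Diff_subset)
  have "\<forall>A S1. \<exists>h. A \<subseteq> {..<K} \<and> S1 \<in> C A \<longrightarrow> bij_betw h A S1"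
    using finite_subset[of _ "{..<K}"] finite_subset[of _ "{..<N}"]
    by (auto simp: C_def intro!: finite_same_card_bij)
  then obtain g where g: "\<And>A S1. A \<subseteq> {..<K} \<Longrightarrow> S1 \<in> C A \<Longrightarrow> bij_betw (g A S1) A S1"
    by metis
  let ?term = "\<lambda>A X ys. lik T W S X ys powr (1/(1+\<rho> A)) * (\<Sum>S1\<in>C A.
      (\<Prod>t<T. W (join_input A ({..<K} - A) (\<lambda>k. X (g A S1 k, t)) (\<lambda>k. X (f k, t))) (ys t))
        powr (1/(1+\<rho> A))) powr \<rho> A"
  have "(\<Sum>X\<in>codebooks N T. Qp q ({..<N} \<times> {..<T}) X *
          (\<Sum>ys\<in>PiE {..<T} (\<lambda>_. UNIV). lik T W S X ys * (if ml_error N T W S X ys then 1 else 0)))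
     \<le> (\<Sum>X\<in>codebooks N T. Qp q ({..<N} \<times> {..<T}) X *
          (\<Sum>ys\<in>PiE {..<T} (\<lambda>_. UNIV). \<Sum>A | A \<subseteq> {..<K} \<and> A \<noteq> {}. ?term A X ys))"
    unfolding C_def
    by (intro sum_mono mult_left_mono Qp_nonneg q ml_error_le_gallager_sum[OF Wn sym f _ \<rho>])
      (auto intro: g simp: C_def)
  also have "\<dots> = (\<Sum>A | A \<subseteq> {..<K} \<and> A \<noteq> {}. \<Sum>X\<in>codebooks N T. Qp q ({..<N} \<times> {..<T}) X *
          (\<Sum>ys\<in>PiE {..<T} (\<lambda>_. UNIV). ?term A X ys))"
    by (simp add: sum_distrib_left sum.swap[of _ "{A. A \<subseteq> {..<K} \<and> A \<noteq> {}}"])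
  also have "\<dots> \<le> (\<Sum>A | A \<subseteq> {..<K} \<and> A \<noteq> {}.
      real (card (C A)) powr \<rho> A * gallager_fun q W A ({..<K} - A) (\<rho> A) ^ T)"
  proof (rule sum_mono)
    fix A assume "A \<in> {A. A \<subseteq> {..<K} \<and> A \<noteq> {}}"
    then have A: "A \<subseteq> {..<K}" and "0 < \<rho> A" "\<rho> A \<le> 1" using \<rho> by auto
    show "(\<Sum>X\<in>codebooks N T. Qp q ({..<N} \<times> {..<T}) X * (\<Sum>ys\<in>PiE {..<T} (\<lambda>_. UNIV). ?term A X ys))
        \<le> real (card (C A)) powr \<rho> A * gallager_fun q W A ({..<K} - A) (\<rho> A) ^ T"
      unfolding lik_eq_join_input[OF A refl S(2)] f_def[symmetric]
      by (rule expected_gallager_bound[OF Wn q S(1) f A refl finC _ \<open>0 < \<rho> A\<close> \<open>\<rho> A \<le> 1\<close>]) (auto simp: C_def intro: g[OF A])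
  qed
  finally show ?thesis unfolding cardC .
qed

lemma avg_err_nonneg:
  fixes W :: "(nat \<Rightarrow> bool) \<Rightarrow> 'y::finite \<Rightarrow> real"
  assumes "\<forall>x y. W x y \<ge> 0" "0 \<le> q" "q \<le> 1"
  shows "avg_err q W N K T \<ge> 0"
  unfolding avg_err_def lik_def using assms
  by (intro divide_nonneg_nonneg sum_nonneg mult_nonneg_nonneg Qp_nonneg prod_nonneg) auto

lemma avg_err_le:
  fixes W :: "(nat \<Rightarrow> bool) \<Rightarrow> 'y::finite \<Rightarrow> real" and \<rho> :: "nat set \<Rightarrow> real"
  assumes Wn: "\<forall>x y. W x y \<ge> 0" and q: "0 \<le> q" "q \<le> 1"
    and sym: "\<forall>\<pi> x y. \<pi> permutes {..<K} \<longrightarrow> W (x \<circ> \<pi>) y = W x y"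
    and KN: "K \<le> N"
    and \<rho>: "\<And>A. A \<subseteq> {..<K} \<Longrightarrow> A \<noteq> {} \<Longrightarrow> 0 < \<rho> A \<and> \<rho> A \<le> 1"
  shows "avg_err q W N K T \<le> (\<Sum>A | A \<subseteq> {..<K} \<and> A \<noteq> {}.
           real ((N - K) choose card A) powr \<rho> A * gallager_fun q W A ({..<K} - A) (\<rho> A) ^ T)"
    (is "_ \<le> ?bound")
proof -
  have "avg_err q W N K T \<le> (\<Sum>S | S \<subseteq> {..<N} \<and> card S = K. ?bound) / real (N choose K)"
    unfolding avg_err_def
    by (intro divide_right_mono sum_mono error_given_defective_set_le[OF Wn q sym _ _ \<rho>]) auto
  also have "\<dots> = ?bound"
    using n_subsets[of "{..<N}" K] KN by simp
  finally show ?thesis .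
qed

section \<open>Asymptotics\<close>

lemma filterlim_diff_choose_at_top:
  assumes "1 \<le> i"
  shows "filterlim (\<lambda>N. real ((N - K) choose i)) at_top sequentially"
  unfolding filterlim_at_top
proof
  fix Z :: real
  have "Z \<le> real ((N - K) choose i)" if "N \<ge> K + i + nat \<lceil>Z\<rceil> * i" for N
  proof -
    define n where "n = N - K"
    have n: "n \<ge> i" "n \<ge> nat \<lceil>Z\<rceil> * i" using that unfolding n_def by auto
    have "Z \<le> real (nat \<lceil>Z\<rceil>)" by linarith
    also have "\<dots> \<le> real n / real i"
      using n(2) assms by (simp add: le_divide_eq of_nat_mult[symmetric] del: of_nat_mult)
    also have "\<dots> \<le> (real n / real i) ^ i"
      using n(1) assms by (intro self_le_power) (auto simp: le_divide_eq)
    also have "\<dots> \<le> real (n choose i)" by (rule binomial_ge_n_over_k_pow_k) (use n in auto)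
    finally show ?thesis unfolding n_def .
  qed
  then show "eventually (\<lambda>N. Z \<le> real ((N - K) choose i)) sequentially"
    unfolding eventually_sequentially by blast
qed

lemma tendsto_powr_mult_power_zero:
  fixes F \<rho> c e :: real and T :: "nat \<Rightarrow> nat" and M :: "nat \<Rightarrow> real"
  assumes M: "filterlim M at_top sequentially" and F: "0 \<le> F" "F \<le> 1 - \<rho> * c"
    and "0 < \<rho>" "0 < e"
    and T: "eventually (\<lambda>N. c * real (T N) \<ge> (1 + e) * ln (M N)) sequentially"
  shows "(\<lambda>N. M N powr \<rho> * F ^ T N) \<longlonglongrightarrow> 0"
proof (rule tendsto_sandwich[of "\<lambda>_. 0" _ _ "\<lambda>N. M N powr (- (\<rho> * e))"])
  show "eventually (\<lambda>N. 0 \<le> M N powr \<rho> * F ^ T N) sequentially" using F by auto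
  have bound: "M N powr \<rho> * F ^ T N \<le> M N powr (- (\<rho> * e))"
    if "c * real (T N) \<ge> (1 + e) * ln (M N)" "M N > 0" for N
  proof -
    have "F ^ T N \<le> exp (- (\<rho> * c)) ^ T N"
      using F exp_ge_add_one_self[of "- (\<rho> * c)"] by (intro power_mono) auto
    also have "\<dots> = exp (- \<rho> * (c * real (T N)))" by (simp add: exp_of_nat_mult[symmetric] mult_ac)
    also have "\<dots> \<le> exp (- \<rho> * ((1 + e) * ln (M N)))"
      using that(1) \<open>0 < \<rho>\<close> by simp
    also have "\<dots> = M N powr (- (\<rho> * (1 + e)))" using that(2) by (simp add: powr_def mult_ac)
    finally have "M N powr \<rho> * F ^ T N \<le> M N powr \<rho> * M N powr (- (\<rho> * (1 + e)))"
      by (intro mult_left_mono) auto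
    also have "\<dots> = M N powr (- (\<rho> * e))" by (simp add: powr_add[symmetric] algebra_simps)
    finally show ?thesis .
  qed
  have "eventually (\<lambda>N. M N > 0) sequentially" using M by (simp add: filterlim_at_top_dense)
  with T show "eventually (\<lambda>N. M N powr \<rho> * F ^ T N \<le> M N powr (- (\<rho> * e))) sequentially"
    by eventually_elim (rule bound)
  show "(\<lambda>N. M N powr (- (\<rho> * e))) \<longlonglongrightarrow> 0"
    using assms by (intro tendsto_neg_powr M) auto
qed simp

lemma eventually_ln_choose_le:
  fixes T :: "nat \<Rightarrow> nat" and mi \<delta> :: real
  assumes "\<delta> > 0" "1 \<le> i" "i \<le> K"
    and hyp: "eventually (\<lambda>N. real (T N) * mi
      \<ge> (1 + \<delta>) * log 2 (real K * real ((N - K) choose i) * real (K choose i))) sequentially"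
  shows "eventually (\<lambda>N. (1 + \<delta>) * ln (real ((N - K) choose i)) \<le> ln 2 * mi * real (T N)
      \<and> 2 \<le> real ((N - K) choose i)) sequentially"
proof -
  define M where "M = (\<lambda>N. real ((N - K) choose i))"
  have "1 \<le> K * (K choose i)" using assms(2,3) by (simp add: Suc_le_eq)
  then have "1 \<le> real K * real (K choose i)" by (metis of_nat_1 of_nat_le_iff of_nat_mult)
  then have log_M_le: "log 2 (M N) \<le> log 2 (real K * M N * real (K choose i))" if "M N \<ge> 2" for N
    using that mult_right_mono[of 1 "real K * real (K choose i)" "M N"] by (simp add: mult_ac)
  have "(1 + \<delta>) * ln (M N) \<le> ln 2 * mi * real (T N)"
    if "(1 + \<delta>) * log 2 (real K * M N * real (K choose i)) \<le> real (T N) * mi" "M N \<ge> 2" for N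
  proof -
    have "(1 + \<delta>) * log 2 (M N) \<le> real (T N) * mi"
      using that mult_left_mono[OF log_M_le[OF that(2)], of "1 + \<delta>"] assms(1) by linarith
    then have "ln 2 * ((1 + \<delta>) * log 2 (M N)) \<le> ln 2 * (real (T N) * mi)" by simp
    then show ?thesis using that(2) by (simp add: log_def mult_ac)
  qed
  moreover have "eventually (\<lambda>N. M N \<ge> 2) sequentially"
    using filterlim_diff_choose_at_top[OF assms(2)] unfolding M_def filterlim_at_top by blast
  ultimately show ?thesis using hyp unfolding M_def by (auto elim: eventually_elim2)
qed

lemma gallager_term_tendsto_zero:
  fixes W :: "(nat \<Rightarrow> bool) \<Rightarrow> 'y::finite \<Rightarrow> real" and T :: "nat \<Rightarrow> nat"
  assumes q: "0 \<le> q" "q \<le> 1" and Wn: "\<forall>x y. W x y \<ge> 0" and Ws: "\<forall>x. (\<Sum>y\<in>UNIV. W x y) = 1"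
    and \<delta>: "\<delta> > 0" and A: "A \<subseteq> {..<K}" "A \<noteq> {}"
    and hyp: "eventually (\<lambda>N. real (T N) * mi_split q K W A
      \<ge> (1 + \<delta>) * log 2 (real K * real ((N - K) choose card A) * real (K choose card A))) sequentially"
  obtains \<rho> where "0 < \<rho>" "\<rho> \<le> 1"
    "(\<lambda>N. real ((N - K) choose card A) powr \<rho> * gallager_fun q W A ({..<K} - A) \<rho> ^ T N) \<longlonglongrightarrow> 0"
proof -
  define M where "M = (\<lambda>N. real ((N - K) choose card A))"
  define mi where "mi = mi_split q K W A"
  have finA: "finite A" using A(1) finite_subset by auto
  have i: "1 \<le> card A" "card A \<le> K"
    using A finA card_mono[of "{..<K}" A] by (auto simp: Suc_le_eq card_gt_0_iff)
  have ev: "eventually (\<lambda>N. (1 + \<delta>) * ln (M N) \<le> ln 2 * mi * real (T N) \<and> 2 \<le> M N) sequentially"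
    unfolding M_def mi_def by (rule eventually_ln_choose_le[OF \<delta> i hyp])
  have "ln 2 * mi > 0"
  proof -
    obtain N where "(1 + \<delta>) * ln (M N) \<le> ln 2 * mi * real (T N)" "M N \<ge> 2"
      using eventually_happens[OF ev] by auto
    then have "0 < ln 2 * mi * real (T N)" using \<delta> by (smt (verit) ln_gt_zero mult_pos_pos)
    then show ?thesis by (simp add: zero_less_mult_iff)
  qed
  define c where "c = ln 2 * mi * (1 + \<delta>/2) / (1 + \<delta>)"
  have "c < ln 2 * mi" unfolding c_def using \<open>ln 2 * mi > 0\<close> \<delta> by (simp add: field_simps)
  then obtain \<rho> where \<rho>: "0 < \<rho>" "\<rho> \<le> 1" "gallager_fun q W A ({..<K} - A) \<rho> \<le> 1 - \<rho> * c"
    using gallager_fun_le_line[OF finA q Wn Ws] unfolding mi_def by blast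
  have "c * real (T N) \<ge> (1 + \<delta>/2) * ln (M N)"
    if "(1 + \<delta>) * ln (M N) \<le> ln 2 * mi * real (T N)" for N
  proof -
    have "(1 + \<delta>/2) / (1 + \<delta>) * ((1 + \<delta>) * ln (M N))
        \<le> (1 + \<delta>/2) / (1 + \<delta>) * (ln 2 * mi * real (T N))"
      using that \<delta> by (intro mult_left_mono) auto
    moreover have "(1 + \<delta>/2) / (1 + \<delta>) * ((1 + \<delta>) * ln (M N)) = (1 + \<delta>/2) * ln (M N)"
      using \<delta> by simp
    moreover have "(1 + \<delta>/2) / (1 + \<delta>) * (ln 2 * mi * real (T N)) = c * real (T N)"
      unfolding c_def by simp
    ultimately show ?thesis by simp
  qed
  with ev have "eventually (\<lambda>N. c * real (T N) \<ge> (1 + \<delta>/2) * ln (M N)) sequentially"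
    by (auto elim: eventually_mono)
  then have "(\<lambda>N. M N powr \<rho> * gallager_fun q W A ({..<K} - A) \<rho> ^ T N) \<longlonglongrightarrow> 0"
    using \<rho> \<delta> by (intro tendsto_powr_mult_power_zero[OF _ gallager_fun_nonneg[OF q]])
      (auto simp: M_def intro: filterlim_diff_choose_at_top[OF i(1)])
  then show ?thesis using that \<rho> unfolding M_def by blast
qed

lemma gallager_exponents_exist:
  fixes W :: "(nat \<Rightarrow> bool) \<Rightarrow> 'y::finite \<Rightarrow> real" and T :: "nat \<Rightarrow> nat"
  assumes q: "0 \<le> q" "q \<le> 1" and Wn: "\<forall>x y. W x y \<ge> 0" and Ws: "\<forall>x. (\<Sum>y\<in>UNIV. W x y) = 1"
    and \<delta>: "\<delta> > 0"
    and hyp: "eventually (\<lambda>N. \<forall>i\<in>{1..K}. \<forall>A. A \<subseteq> {..<K} \<and> card A = i \<longrightarrow>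
      real (T N) * mi_split q K W A \<ge> (1 + \<delta>) * log 2 (real K * real ((N - K) choose i) * real (K choose i)))
      sequentially"
  obtains \<rho> where "\<And>A. A \<subseteq> {..<K} \<Longrightarrow> A \<noteq> {} \<Longrightarrow> 0 < \<rho> A \<and> \<rho> A \<le> 1"
    "\<And>A. A \<subseteq> {..<K} \<Longrightarrow> A \<noteq> {} \<Longrightarrow>
      (\<lambda>N. real ((N - K) choose card A) powr \<rho> A * gallager_fun q W A ({..<K} - A) (\<rho> A) ^ T N) \<longlonglongrightarrow> 0"
proof -
  have "\<exists>\<rho>. (0 < \<rho> \<and> \<rho> \<le> 1) \<and>
      (\<lambda>N. real ((N - K) choose card A) powr \<rho> * gallager_fun q W A ({..<K} - A) \<rho> ^ T N) \<longlonglongrightarrow> 0"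
    if A: "A \<in> {A. A \<subseteq> {..<K} \<and> A \<noteq> {}}" for A
  proof -
    have A': "A \<subseteq> {..<K}" "A \<noteq> {}" "card A \<in> {1..K}"
      using A card_mono[of "{..<K}" A] finite_subset[of A "{..<K}"] by (auto simp: Suc_le_eq card_gt_0_iff)
    have "eventually (\<lambda>N. real (T N) * mi_split q K W A
      \<ge> (1 + \<delta>) * log 2 (real K * real ((N - K) choose card A) * real (K choose card A))) sequentially"
      using hyp by (rule eventually_mono) (use A' in blast)
    from gallager_term_tendsto_zero[OF q Wn Ws \<delta> A'(1,2) this] show ?thesis by blast
  qed
  then have "\<forall>A\<in>{A. A \<subseteq> {..<K} \<and> A \<noteq> {}}. \<exists>\<rho>. (0 < \<rho> \<and> \<rho> \<le> 1) \<and>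
      (\<lambda>N. real ((N - K) choose card A) powr \<rho> * gallager_fun q W A ({..<K} - A) \<rho> ^ T N) \<longlonglongrightarrow> 0"
    by blast
  from bchoice[OF this] obtain \<rho> where \<rho>: "\<forall>A\<in>{A. A \<subseteq> {..<K} \<and> A \<noteq> {}}. (0 < \<rho> A \<and> \<rho> A \<le> 1) \<and>
      (\<lambda>N. real ((N - K) choose card A) powr \<rho> A * gallager_fun q W A ({..<K} - A) (\<rho> A) ^ T N) \<longlonglongrightarrow> 0"
    by blast
  show ?thesis by (rule that) (use \<rho> in blast)+
qed

theorem theorem1:
  fixes q \<delta> :: real and K :: nat
    and W :: "(nat \<Rightarrow> bool) \<Rightarrow> 'y::finite \<Rightarrow> real"
    and T :: "nat \<Rightarrow> nat"
  assumes "0 \<le> q" and "q \<le> 1" and "K \<ge> 1"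
    and "\<forall>x y. W x y \<ge> 0"
    and "\<forall>x. (\<Sum>y\<in>UNIV. W x y) = 1"
    and "\<forall>\<pi> x y. \<pi> permutes {..<K} \<longrightarrow> W (x \<circ> \<pi>) y = W x y"
    and "\<delta> > 0"
    and "eventually (\<lambda>N. \<forall>i\<in>{1..K}. \<forall>A. A \<subseteq> {..<K} \<and> card A = i \<longrightarrow>
           real (T N) * mi_split q K W A
             \<ge> (1 + \<delta>) * log 2 (real K * real ((N - K) choose i) * real (K choose i)))
         sequentially"
  shows "(\<lambda>N. avg_err q W N K (T N)) \<longlonglongrightarrow> 0"
proof -
  note q = assms(1,2) and Wn = assms(4) and sym = assms(6)
  obtain \<rho> where \<rho>: "\<And>A. A \<subseteq> {..<K} \<Longrightarrow> A \<noteq> {} \<Longrightarrow> 0 < \<rho> A \<and> \<rho> A \<le> 1"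
    and lim: "\<And>A. A \<subseteq> {..<K} \<Longrightarrow> A \<noteq> {} \<Longrightarrow>
      (\<lambda>N. real ((N - K) choose card A) powr \<rho> A * gallager_fun q W A ({..<K} - A) (\<rho> A) ^ T N) \<longlonglongrightarrow> 0"
    using gallager_exponents_exist[OF q Wn assms(5,7,8)] by blast
  show ?thesis
  proof (rule tendsto_sandwich[OF _ _ tendsto_const tendsto_null_sum])
    show "eventually (\<lambda>N. 0 \<le> avg_err q W N K (T N)) sequentially"
      using avg_err_nonneg[OF Wn q] by simp
    show "eventually (\<lambda>N. avg_err q W N K (T N) \<le> (\<Sum>A | A \<subseteq> {..<K} \<and> A \<noteq> {}.
        real ((N - K) choose card A) powr \<rho> A * gallager_fun q W A ({..<K} - A) (\<rho> A) ^ T N)) sequentially"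
      by (rule eventually_sequentiallyI) (rule avg_err_le[OF Wn q sym _ \<rho>])
  qed (auto intro: lim)
qed

end
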